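(* Let $A=\mathcal{W}(H,\theta,z_0,z_1)$ be a triangular generalized Weyl algebra, and give $A$ the $\mathbb{Z}$-grading with $\deg u=1$, $\deg d=-1$, $\deg H=0$; let $A[m]$ denote its degree-$m$ component. Then for every $m\in\mathbb{Z}$, $A[m]$ is isomorphic to $H[du]$ as a left $H[du]$-module.
   Context: $\mathbb{F}$ is a field, $H$ a commutative $\mathbb{F}$-algebra, $\theta:H\to H$ an $\mathbb{F}$-algebra automorphism, $z_0\in H$, $z_1\in H^\times$, and $\mathcal{W}(H,\theta,z_0,z_1):=H\langle d,u\rangle/(uh=\theta(h)u,\ hd=d\theta(h),\ ud=z_0+dz_1u\ \forall h\in H)$. Here $H[du]$ denotes the subalgebra of $A$ generated by $H$ and $du$ (which commutes with $H$). *)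

theory Defs
  imports Main
begin

text \<open>The field F is a type 'f :: field; the commutative F-algebra H is a type
'h :: comm_ring_1 together with its structure map iota : F -> H (a ring homomorphism).
H<d,u> is realised as the F-algebra freely generated by the symbols GH h (h in H), GD, GU,
modulo the relations making h |-> GH h an F-algebra homomorphism; together with the
defining relations of W this gives W(H,theta,z0,z1) as a quotient of the free algebra.\<close>

definition is_alg_map :: "('f::field \<Rightarrow> 'h::comm_ring_1) \<Rightarrow> bool" where
  "is_alg_map \<iota> \<longleftrightarrow> \<iota> 1 = 1 \<and> (\<forall>a b. \<iota> (a + b) = \<iota> a + \<iota> b) \<and> (\<forall>a b. \<iota> (a * b) = \<iota> a * \<iota> b)"

definition is_alg_automorphism :: "('f::field \<Rightarrow> 'h::comm_ring_1) \<Rightarrow> ('h \<Rightarrow> 'h) \<Rightarrow> bool" where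
  "is_alg_automorphism \<iota> \<theta> \<longleftrightarrow> bij \<theta> \<and> \<theta> 1 = 1 \<and> (\<forall>a b. \<theta> (a + b) = \<theta> a + \<theta> b)
     \<and> (\<forall>a b. \<theta> (a * b) = \<theta> a * \<theta> b) \<and> (\<forall>c. \<theta> (\<iota> c) = \<iota> c)"

datatype 'h gsym = GH 'h | GD | GU

text \<open>Free F-algebra on the symbols: finitely supported functions from words to F.\<close>
type_synonym ('f, 'h) fa = "'h gsym list \<Rightarrow> 'f"

definition FA :: "('f::field, 'h) fa set" where
  "FA = {p. finite {w. p w \<noteq> 0}}"

definition fa_add :: "('f::field, 'h) fa \<Rightarrow> ('f, 'h) fa \<Rightarrow> ('f, 'h) fa" where
  "fa_add p q = (\<lambda>w. p w + q w)"

definition fa_diff :: "('f::field, 'h) fa \<Rightarrow> ('f, 'h) fa \<Rightarrow> ('f, 'h) fa" where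
  "fa_diff p q = (\<lambda>w. p w - q w)"

definition fa_zero :: "('f::field, 'h) fa" where
  "fa_zero = (\<lambda>w. 0)"

definition fa_mult :: "('f::field, 'h) fa \<Rightarrow> ('f, 'h) fa \<Rightarrow> ('f, 'h) fa" where
  "fa_mult p q = (\<lambda>w. \<Sum>i\<le>length w. p (take i w) * q (drop i w))"

definition fa_scal :: "'f::field \<Rightarrow> ('f, 'h) fa" where
  "fa_scal c = (\<lambda>w. if w = [] then c else 0)"

definition fa_gen :: "'h gsym \<Rightarrow> ('f::field, 'h) fa" where
  "fa_gen s = (\<lambda>w. if w = [s] then 1 else 0)"

definition gwa_rels :: "('f::field \<Rightarrow> 'h::comm_ring_1) \<Rightarrow> ('h \<Rightarrow> 'h) \<Rightarrow> 'h \<Rightarrow> 'h \<Rightarrow> ('f, 'h) fa set" where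
  "gwa_rels \<iota> \<theta> z0 z1 =
     {fa_diff (fa_gen (GH (a + b))) (fa_add (fa_gen (GH a)) (fa_gen (GH b))) | a b. True}
   \<union> {fa_diff (fa_gen (GH (a * b))) (fa_mult (fa_gen (GH a)) (fa_gen (GH b))) | a b. True}
   \<union> {fa_diff (fa_gen (GH (\<iota> c * a))) (fa_mult (fa_scal c) (fa_gen (GH a))) | c a. True}
   \<union> {fa_diff (fa_gen (GH 1)) (fa_scal 1)}
   \<union> {fa_diff (fa_mult (fa_gen GU) (fa_gen (GH h))) (fa_mult (fa_gen (GH (\<theta> h))) (fa_gen GU)) | h. True}
   \<union> {fa_diff (fa_mult (fa_gen (GH h)) (fa_gen GD)) (fa_mult (fa_gen GD) (fa_gen (GH (\<theta> h)))) | h. True}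
   \<union> {fa_diff (fa_mult (fa_gen GU) (fa_gen GD))
        (fa_add (fa_gen (GH z0)) (fa_mult (fa_mult (fa_gen GD) (fa_gen (GH z1))) (fa_gen GU)))}"

inductive_set ideal_gen :: "('f::field, 'h) fa set \<Rightarrow> ('f, 'h) fa set" for R where
  base: "r \<in> R \<Longrightarrow> r \<in> ideal_gen R"
| zero: "fa_zero \<in> ideal_gen R"
| add: "x \<in> ideal_gen R \<Longrightarrow> y \<in> ideal_gen R \<Longrightarrow> fa_add x y \<in> ideal_gen R"
| lmult: "a \<in> FA \<Longrightarrow> x \<in> ideal_gen R \<Longrightarrow> fa_mult a x \<in> ideal_gen R"
| rmult: "a \<in> FA \<Longrightarrow> x \<in> ideal_gen R \<Longrightarrow> fa_mult x a \<in> ideal_gen R"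

definition gwa_ideal where
  "gwa_ideal \<iota> \<theta> z0 z1 = ideal_gen (gwa_rels \<iota> \<theta> z0 z1)"

definition gwa_cls :: "('f::field \<Rightarrow> 'h::comm_ring_1) \<Rightarrow> ('h \<Rightarrow> 'h) \<Rightarrow> 'h \<Rightarrow> 'h \<Rightarrow> ('f, 'h) fa \<Rightarrow> ('f, 'h) fa set" where
  "gwa_cls \<iota> \<theta> z0 z1 x = {y \<in> FA. fa_diff y x \<in> gwa_ideal \<iota> \<theta> z0 z1}"

definition gwa_carrier where
  "gwa_carrier \<iota> \<theta> z0 z1 = gwa_cls \<iota> \<theta> z0 z1 ` FA"

definition gwa_rep :: "('f, 'h) fa set \<Rightarrow> ('f::field, 'h) fa" where
  "gwa_rep X = (SOME x. x \<in> X)"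

definition gwa_add where
  "gwa_add \<iota> \<theta> z0 z1 X Y = gwa_cls \<iota> \<theta> z0 z1 (fa_add (gwa_rep X) (gwa_rep Y))"

definition gwa_mult where
  "gwa_mult \<iota> \<theta> z0 z1 X Y = gwa_cls \<iota> \<theta> z0 z1 (fa_mult (gwa_rep X) (gwa_rep Y))"

fun word_deg :: "'h gsym list \<Rightarrow> int" where
  "word_deg [] = 0"
| "word_deg (GU # w) = word_deg w + 1"
| "word_deg (GD # w) = word_deg w - 1"
| "word_deg (GH _ # w) = word_deg w"

definition fa_homog :: "int \<Rightarrow> ('f::field, 'h) fa set" where
  "fa_homog m = {p \<in> FA. \<forall>w. p w \<noteq> 0 \<longrightarrow> word_deg w = m}"

text \<open>A[m]: the degree-m component of A (image of the degree-m part of the free algebra;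
the defining relations are homogeneous).\<close>
definition gwa_component where
  "gwa_component \<iota> \<theta> z0 z1 m = gwa_cls \<iota> \<theta> z0 z1 ` fa_homog m"

inductive_set fa_subalg :: "('f::field, 'h) fa set \<Rightarrow> ('f, 'h) fa set" for G where
  gen: "g \<in> G \<Longrightarrow> g \<in> fa_subalg G"
| scal: "fa_scal c \<in> fa_subalg G"
| add: "x \<in> fa_subalg G \<Longrightarrow> y \<in> fa_subalg G \<Longrightarrow> fa_add x y \<in> fa_subalg G"
| mult: "x \<in> fa_subalg G \<Longrightarrow> y \<in> fa_subalg G \<Longrightarrow> fa_mult x y \<in> fa_subalg G"

definition gwa_Hdu where
  "gwa_Hdu \<iota> \<theta> z0 z1 = gwa_cls \<iota> \<theta> z0 z1 `
     fa_subalg ({fa_gen (GH h) | h. True} \<union> {fa_mult (fa_gen GD) (fa_gen GU)})"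

definition gwa_left_module_iso where
  "gwa_left_module_iso \<iota> \<theta> z0 z1 Rg M N \<phi> \<longleftrightarrow>
     bij_betw \<phi> M N
     \<and> (\<forall>X\<in>M. \<forall>Y\<in>M. \<phi> (gwa_add \<iota> \<theta> z0 z1 X Y) = gwa_add \<iota> \<theta> z0 z1 (\<phi> X) (\<phi> Y))
     \<and> (\<forall>r\<in>Rg. \<forall>X\<in>M. \<phi> (gwa_mult \<iota> \<theta> z0 z1 r X) = gwa_mult \<iota> \<theta> z0 z1 r (\<phi> X))"

end

theory Submission
  imports Defs "HOL-Library.Function_Algebras"
begin

text \<open>Every element of A is an H-linear combination of normal forms h d^i u^j, and the
  coefficients are well defined: the free algebra acts on H-valued functions on \<open>\<nat> \<times> \<nat>\<close>
  (the vector at (i, j) standing for d^i u^j) compatibly with the relations, and applying an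
  element to the vector at (0, 0) reads off its coefficients. An element of degree m has its
  coefficients on the line j - i = m. Let g be u^m or d^-m. Since z1 is a unit, the coefficients of
  (du)^n g are triangular with a unit at the top position of their row, so the H[du]-linear map
  r \<mapsto> r g from H[du] to A[m] is surjective (eliminate the top row repeatedly) and injective
  (compare top coefficients). Its inverse is the required isomorphism.\<close>

section \<open>The free algebra\<close>

lemma sum_fun_apply: "(\<Sum>a\<in>A. f a) x = (\<Sum>a\<in>A. f a x)"
  by (induction A rule: infinite_finite_induct) auto

definition mon :: "'h gsym list \<Rightarrow> ('f::field, 'h) fa" where
  "mon a = (\<lambda>w. if w = a then 1 else 0)"

definition smul :: "'f::field \<Rightarrow> ('f, 'h) fa \<Rightarrow> ('f, 'h) fa" where
  "smul c p = (\<lambda>w. c * p w)"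

notation fa_mult (infixl "\<odot>" 70)

lemma fa_add_eq: "fa_add p q = p + q" by (simp add: fa_add_def plus_fun_def)
lemma fa_diff_eq: "fa_diff p q = p - q" by (simp add: fa_diff_def fun_diff_def)
lemma fa_zero_eq: "fa_zero = 0" by (simp add: fa_zero_def zero_fun_def)
lemma fa_gen_eq: "fa_gen s = mon [s]" by (simp add: fa_gen_def mon_def)
lemma fa_scal_eq: "fa_scal c = smul c (mon [])" by (auto simp: fa_scal_def smul_def mon_def)

lemma FA_zero [simp]: "0 \<in> FA" by (simp add: FA_def)
lemma FA_add [simp]: "p \<in> FA \<Longrightarrow> q \<in> FA \<Longrightarrow> p + q \<in> FA"
  unfolding FA_def by (auto intro: finite_subset[of _ "{w. p w \<noteq> 0} \<union> {w. q w \<noteq> 0}"])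
lemma FA_diff [simp]: "p \<in> FA \<Longrightarrow> q \<in> FA \<Longrightarrow> p - q \<in> FA"
  unfolding FA_def by (auto intro: finite_subset[of _ "{w. p w \<noteq> 0} \<union> {w. q w \<noteq> 0}"])
lemma FA_smul [simp]: "p \<in> FA \<Longrightarrow> smul c p \<in> FA"
  unfolding FA_def smul_def by (auto elim!: finite_subset[rotated])
lemma FA_mon [simp]: "mon a \<in> FA"
  unfolding FA_def mon_def by (auto elim!: finite_subset[rotated])
lemma FA_scal [simp]: "fa_scal c \<in> FA" by (simp add: fa_scal_eq)
lemma FA_sum [simp]: "(\<And>a. a \<in> A \<Longrightarrow> f a \<in> FA) \<Longrightarrow> (\<Sum>a\<in>A. f a) \<in> FA"
  by (induction A rule: infinite_finite_induct) auto
lemma FA_sum_list [simp]: "(\<And>e. e \<in> set L \<Longrightarrow> f e \<in> FA) \<Longrightarrow> sum_list (map f L) \<in> FA"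
  by (induction L) simp_all

lemma fa_mult_add_left: "(p + q) \<odot> r = p \<odot> r + q \<odot> r"
  by (simp add: fa_mult_def fun_eq_iff distrib_right sum.distrib)
lemma fa_mult_add_right: "r \<odot> (p + q) = r \<odot> p + r \<odot> q"
  by (simp add: fa_mult_def fun_eq_iff distrib_left sum.distrib)
lemma fa_mult_diff_left: "(p - q) \<odot> r = p \<odot> r - q \<odot> r"
  by (simp add: fa_mult_def fun_eq_iff left_diff_distrib sum_subtractf)
lemma fa_mult_diff_right: "r \<odot> (p - q) = r \<odot> p - r \<odot> q"
  by (simp add: fa_mult_def fun_eq_iff right_diff_distrib sum_subtractf)
lemma fa_mult_zero_left [simp]: "0 \<odot> r = 0"
  by (simp add: fa_mult_def fun_eq_iff)
lemma fa_mult_zero_right [simp]: "r \<odot> 0 = 0"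
  by (simp add: fa_mult_def fun_eq_iff)
lemma fa_mult_smul_left: "smul c p \<odot> r = smul c (p \<odot> r)"
  by (simp add: fa_mult_def smul_def fun_eq_iff sum_distrib_left mult.assoc)
lemma fa_mult_smul_right: "r \<odot> smul c p = smul c (r \<odot> p)"
  by (simp add: fa_mult_def smul_def fun_eq_iff sum_distrib_left mult.left_commute)
lemma fa_mult_sum_left: "(\<Sum>a\<in>A. f a) \<odot> r = (\<Sum>a\<in>A. f a \<odot> r)"
  unfolding fun_eq_iff fa_mult_def sum_fun_apply sum_distrib_right by (rule allI, rule sum.swap)
lemma fa_mult_sum_right: "r \<odot> (\<Sum>a\<in>A. f a) = (\<Sum>a\<in>A. r \<odot> f a)"
  unfolding fun_eq_iff fa_mult_def sum_fun_apply sum_distrib_left by (rule allI, rule sum.swap)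
lemma fa_mult_sum_list_right: "r \<odot> sum_list (map f L) = sum_list (map (\<lambda>e. r \<odot> f e) L)"
  by (induction L) (simp_all only: list.map sum_list.Nil sum_list.Cons fa_mult_zero_right
      fa_mult_add_right)

lemma smul_sum: "smul c (\<Sum>a\<in>A. f a) = (\<Sum>a\<in>A. smul c (f a))"
  by (induction A rule: infinite_finite_induct) (auto simp: smul_def fun_eq_iff distrib_left)
lemma smul_sum_list: "smul c (sum_list (map f L)) = sum_list (map (\<lambda>e. smul c (f e)) L)"
  by (induction L) (simp_all add: smul_def fun_eq_iff distrib_left)
lemma smul_smul: "smul c (smul d p) = smul (c * d) p"
  by (simp add: smul_def mult.assoc)
lemma smul_minus_one: "smul (-1) p = - p"
  by (simp add: smul_def fun_eq_iff)

lemma mon_mult: "mon a \<odot> mon b = (mon (a @ b) :: ('f::field, 'h) fa)"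
proof (rule ext)
  fix w :: "'h gsym list"
  have "(mon a \<odot> mon b) w = (\<Sum>i\<le>length w. if i = length a \<and> w = a @ b then (1::'f) else 0)"
    unfolding fa_mult_def mon_def
  proof (rule sum.cong[OF refl])
    fix i assume "i \<in> {..length w}"
    then have "(take i w = a \<and> drop i w = b) \<longleftrightarrow> (i = length a \<and> w = a @ b)"
      by (metis append_eq_conv_conj append_take_drop_id atMost_iff length_take min.absorb2)
    then show "(if take i w = a then 1 else 0) * (if drop i w = b then 1 else 0) =
      (if i = length a \<and> w = a @ b then (1::'f) else 0)" by auto
  qed
  also have "\<dots> = (mon (a @ b) :: ('f, 'h) fa) w"
    by (auto simp: mon_def)
  finally show "(mon a \<odot> mon b) w = (mon (a @ b) :: ('f, 'h) fa) w" .
qed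

lemma fa_expand_mon: "p \<in> FA \<Longrightarrow> p = (\<Sum>w | p w \<noteq> 0. smul (p w) (mon w))"
  by (rule ext) (auto simp: sum_fun_apply smul_def mon_def FA_def if_distrib cong: if_cong)

lemma FA_mult [simp]:
  assumes "p \<in> FA" "q \<in> FA"
  shows "p \<odot> q \<in> FA"
proof -
  have "{w. (p \<odot> q) w \<noteq> 0} \<subseteq> (\<lambda>(a, b). a @ b) ` ({w. p w \<noteq> 0} \<times> {w. q w \<noteq> 0})"
  proof
    fix w assume "w \<in> {w. (p \<odot> q) w \<noteq> 0}"
    then obtain i where "p (take i w) * q (drop i w) \<noteq> 0"
      unfolding fa_mult_def by (auto elim: sum.not_neutral_contains_not_neutral)
    then show "w \<in> (\<lambda>(a, b). a @ b) ` ({w. p w \<noteq> 0} \<times> {w. q w \<noteq> 0})"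
      by (auto intro!: image_eqI[of _ _ "(take i w, drop i w)"])
  qed
  then show ?thesis using assms unfolding FA_def
    by (auto elim!: finite_subset intro!: finite_imageI)
qed

lemma fa_mult_assoc:
  assumes "p \<in> FA" "q \<in> FA" "r \<in> FA"
  shows "p \<odot> q \<odot> r = p \<odot> (q \<odot> r)"
proof -
  have "(\<Sum>a | p a \<noteq> 0. smul (p a) (mon a)) \<odot> (\<Sum>b | q b \<noteq> 0. smul (q b) (mon b))
          \<odot> (\<Sum>c | r c \<noteq> 0. smul (r c) (mon c))
      = (\<Sum>a | p a \<noteq> 0. smul (p a) (mon a)) \<odot> ((\<Sum>b | q b \<noteq> 0. smul (q b) (mon b))
          \<odot> (\<Sum>c | r c \<noteq> 0. smul (r c) (mon c)))"
    by (simp add: fa_mult_sum_left fa_mult_sum_right fa_mult_smul_left fa_mult_smul_right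
        mon_mult smul_sum)
  then show ?thesis
    by (simp only: fa_expand_mon[OF assms(1), symmetric] fa_expand_mon[OF assms(2), symmetric]
        fa_expand_mon[OF assms(3), symmetric])
qed

lemma mon_Nil_mult: "p \<in> FA \<Longrightarrow> mon [] \<odot> p = p"
  by (subst (1 2) fa_expand_mon) (simp_all add: fa_mult_sum_right fa_mult_smul_right mon_mult)

lemma fa_scal_mult: "p \<in> FA \<Longrightarrow> fa_scal c \<odot> p = smul c p"
  by (simp add: fa_scal_eq fa_mult_smul_left mon_Nil_mult)

section \<open>The grading and the preimage of H[du]\<close>

lemma word_deg_append: "word_deg (a @ b) = word_deg a + word_deg b"
  by (induction a rule: word_deg.induct) simp_all

lemma word_deg_replicate_GD: "word_deg (replicate n GD) = - int n"
  by (induction n) simp_all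

lemma word_deg_replicate_GU: "word_deg (replicate n GU) = int n"
  by (induction n) simp_all

lemma mon_homog: "mon w \<in> fa_homog (word_deg w)"
  using FA_mon[of w] by (auto simp: fa_homog_def mon_def)

lemma fa_scal_homog: "fa_scal c \<in> fa_homog 0"
  using FA_scal[of c] by (auto simp: fa_homog_def fa_scal_def)

lemma fa_homog_add:
  assumes "p \<in> fa_homog m" "q \<in> fa_homog m"
  shows "p + q \<in> fa_homog m"
proof -
  have "word_deg w = m" if "(p + q) w \<noteq> 0" for w
    using that assms by (cases "p w = 0") (auto simp: fa_homog_def)
  then show ?thesis using assms by (simp add: fa_homog_def)
qed

lemma fa_homog_diff:
  assumes "p \<in> fa_homog m" "q \<in> fa_homog m"
  shows "p - q \<in> fa_homog m"
proof -
  have "word_deg w = m" if "(p - q) w \<noteq> 0" for w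
    using that assms by (cases "p w = 0") (auto simp: fa_homog_def)
  then show ?thesis using assms by (simp add: fa_homog_def)
qed

lemma fa_homog_mult:
  assumes "p \<in> fa_homog m" "q \<in> fa_homog n"
  shows "p \<odot> q \<in> fa_homog (m + n)"
proof -
  have "word_deg w = m + n" if "(p \<odot> q) w \<noteq> 0" for w
  proof -
    obtain i where "p (take i w) * q (drop i w) \<noteq> 0"
      using \<open>(p \<odot> q) w \<noteq> 0\<close> unfolding fa_mult_def
      by (auto elim: sum.not_neutral_contains_not_neutral)
    then have "word_deg (take i w) = m" "word_deg (drop i w) = n"
      using assms by (auto simp: fa_homog_def)
    then show ?thesis using word_deg_append[of "take i w" "drop i w"] by simp
  qed
  then show ?thesis using assms by (simp add: fa_homog_def)
qed

abbreviation hdu_alg :: "('f::field, 'h) fa set" where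
  "hdu_alg \<equiv> fa_subalg ({fa_gen (GH h) | h. True} \<union> {fa_gen GD \<odot> fa_gen GU})"

lemma hdu_alg_homog: "x \<in> hdu_alg \<Longrightarrow> x \<in> fa_homog 0"
proof (induction rule: fa_subalg.induct)
  case (gen g)
  then show ?case using mon_homog[of "[GH _]"] mon_homog[of "[GD, GU]"]
    by (auto simp: fa_gen_eq mon_mult)
next
  case (scal c)
  show ?case by (rule fa_scal_homog)
next
  case (add x y)
  then show ?case unfolding fa_add_eq by (blast intro: fa_homog_add)
next
  case (mult x y)
  then show ?case using fa_homog_mult[of x 0 y 0] by simp
qed

lemma hdu_alg_FA: "x \<in> hdu_alg \<Longrightarrow> x \<in> FA"
  using hdu_alg_homog by (auto simp: fa_homog_def)

lemma hdu_alg_add: "x \<in> hdu_alg \<Longrightarrow> y \<in> hdu_alg \<Longrightarrow> x + y \<in> hdu_alg"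
  using fa_subalg.add[of x _ y] by (simp add: fa_add_eq)

lemma hdu_alg_mult: "x \<in> hdu_alg \<Longrightarrow> y \<in> hdu_alg \<Longrightarrow> x \<odot> y \<in> hdu_alg"
  by (rule fa_subalg.mult)

lemma hdu_alg_diff:
  assumes "x \<in> hdu_alg" "y \<in> hdu_alg"
  shows "x - y \<in> hdu_alg"
proof -
  have "fa_scal (-1) \<odot> y \<in> hdu_alg" by (intro hdu_alg_mult fa_subalg.scal assms(2))
  then have "x + - y \<in> hdu_alg"
    by (intro hdu_alg_add assms(1)) (simp add: fa_scal_mult hdu_alg_FA[OF assms(2)] smul_minus_one)
  then show ?thesis by simp
qed

lemma hdu_alg_zero: "0 \<in> hdu_alg"
  using fa_subalg.scal[of 0] by (simp add: fa_scal_def fun_eq_iff zero_fun_def)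

lemma hdu_alg_GH: "mon [GH h] \<in> hdu_alg"
proof -
  have "fa_gen (GH h) \<in> hdu_alg" by (rule fa_subalg.gen) blast
  then show ?thesis by (simp only: fa_gen_eq)
qed

lemma hdu_alg_DU: "mon [GD, GU] \<in> hdu_alg"
proof -
  have "fa_gen GD \<odot> fa_gen GU \<in> hdu_alg" by (rule fa_subalg.gen) blast
  then show ?thesis by (simp only: fa_gen_eq mon_mult append_Cons append_Nil)
qed

definition grade_gen :: "int \<Rightarrow> ('f::field, 'h) fa" where
  "grade_gen m = (if 0 \<le> m then mon (replicate (nat m) GU) else mon (replicate (nat (- m)) GD))"

lemma grade_gen_homog: "grade_gen m \<in> fa_homog m"
  using mon_homog[of "replicate (nat m) GU"] mon_homog[of "replicate (nat (- m)) GD"]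
  by (cases "0 \<le> m") (simp_all add: grade_gen_def word_deg_replicate_GU word_deg_replicate_GD)

section \<open>Coefficient vectors\<close>

type_synonym 'h vec = "nat \<times> nat \<Rightarrow> 'h"

definition basis_vec :: "nat \<Rightarrow> nat \<Rightarrow> 'h::comm_ring_1 vec" where
  "basis_vec a b = (\<lambda>y. if y = (a, b) then 1 else 0)"

definition lmul_vec :: "'h::comm_ring_1 \<Rightarrow> 'h vec \<Rightarrow> 'h vec" where
  "lmul_vec h v = (\<lambda>y. h * v y)"

lemma lmul_vec_add_left: "lmul_vec (a + b) v = lmul_vec a v + lmul_vec b v"
  by (simp add: lmul_vec_def fun_eq_iff distrib_right)

lemma lmul_vec_add: "lmul_vec h (v + w) = lmul_vec h v + lmul_vec h w"
  by (simp add: lmul_vec_def fun_eq_iff distrib_left)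

lemma lmul_vec_diff_left: "lmul_vec (a - b) v = lmul_vec a v - lmul_vec b v"
  by (simp add: lmul_vec_def fun_eq_iff left_diff_distrib)

lemma lmul_vec_mult: "lmul_vec (a * b) v = lmul_vec a (lmul_vec b v)"
  by (simp add: lmul_vec_def mult.assoc)

lemma lmul_vec_one [simp]: "lmul_vec 1 v = v"
  by (simp add: lmul_vec_def)

lemma lmul_vec_zero [simp]: "lmul_vec 0 v = 0" "lmul_vec h 0 = 0"
  by (simp_all add: lmul_vec_def fun_eq_iff)

lemma lmul_vec_sum: "lmul_vec h (\<Sum>a\<in>A. f a) = (\<Sum>a\<in>A. lmul_vec h (f a))"
  by (simp add: lmul_vec_def fun_eq_iff sum_fun_apply sum_distrib_left)

lemma unit_mult: "(a::'a::comm_monoid_mult) dvd 1 \<Longrightarrow> b dvd 1 \<Longrightarrow> a * b dvd 1"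
  using mult_dvd_mono[of a 1 b 1] by simp

definition lead_at :: "'h::comm_ring_1 vec \<Rightarrow> nat \<Rightarrow> nat \<Rightarrow> bool" where
  "lead_at v a b \<longleftrightarrow> (\<forall>a' b'. b < b' \<longrightarrow> v (a', b') = 0) \<and> v (a, b) dvd 1"

lemma lead_at_basis_vec: "lead_at (basis_vec a b) a b"
  by (simp add: lead_at_def basis_vec_def)

lemma lead_at_independent:
  assumes "\<forall>k<N. lead_at (v k) (a + k) (b + k)" and "(\<Sum>k<N. lmul_vec (c k) (v k)) = 0"
  shows "\<forall>k<N. c k = 0"
  using assms
proof (induction N)
  case (Suc N)
  have "v k (a + N, b + N) = 0" if "k < N" for k
    using Suc.prems(1) that by (simp add: lead_at_def)
  then have "c N * v N (a + N, b + N) = 0"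
    using fun_cong[OF Suc.prems(2), of "(a + N, b + N)"] by (simp add: sum_fun_apply lmul_vec_def)
  moreover have "v N (a + N, b + N) dvd 1"
    using Suc.prems(1) by (simp add: lead_at_def)
  then obtain k where "1 = v N (a + N, b + N) * k" by (rule dvdE)
  ultimately have "c N = 0"
    by (metis mult.assoc mult_1_right mult_zero_left)
  with Suc show ?case by (simp add: less_Suc_eq)
qed simp

section \<open>Congruence modulo the defining relations\<close>

locale gwa =
  fixes \<iota> :: "'f::field \<Rightarrow> 'h::comm_ring_1" and \<theta> :: "'h \<Rightarrow> 'h" and z0 z1 :: 'h
  assumes alg_map: "is_alg_map \<iota>"
    and automorphism: "is_alg_automorphism \<iota> \<theta>"
    and z1_unit: "z1 dvd 1"
begin

abbreviation I where "I \<equiv> gwa_ideal \<iota> \<theta> z0 z1"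

lemma gwa_rels_FA: "r \<in> gwa_rels \<iota> \<theta> z0 z1 \<Longrightarrow> r \<in> FA"
  unfolding gwa_rels_def fa_gen_eq fa_diff_eq fa_add_eq fa_scal_eq by auto

lemma I_FA: "x \<in> I \<Longrightarrow> x \<in> FA"
  unfolding gwa_ideal_def
proof (induction rule: ideal_gen.induct)
  case (add x y)
  then have "x + y \<in> FA" by simp
  then show ?case by (simp only: fa_add_eq)
next
  case zero
  show ?case by (simp add: FA_def fa_zero_def)
qed (simp_all add: gwa_rels_FA)

lemma I_zero: "0 \<in> I"
  using ideal_gen.zero[of "gwa_rels \<iota> \<theta> z0 z1"] by (simp add: gwa_ideal_def fa_zero_eq)

lemma I_add: "x \<in> I \<Longrightarrow> y \<in> I \<Longrightarrow> x + y \<in> I"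
  unfolding gwa_ideal_def using ideal_gen.add[of x _ y] by (simp add: fa_add_eq)

lemma I_lmult: "a \<in> FA \<Longrightarrow> x \<in> I \<Longrightarrow> a \<odot> x \<in> I"
  unfolding gwa_ideal_def by (rule ideal_gen.lmult)

lemma I_rmult: "a \<in> FA \<Longrightarrow> x \<in> I \<Longrightarrow> x \<odot> a \<in> I"
  unfolding gwa_ideal_def by (rule ideal_gen.rmult)

lemma I_smul:
  assumes "x \<in> I"
  shows "smul c x \<in> I"
proof -
  have "fa_scal c \<odot> x \<in> I" by (rule I_lmult[OF FA_scal assms])
  then show ?thesis by (simp only: fa_scal_mult[OF I_FA[OF assms]])
qed

lemma I_uminus: "x \<in> I \<Longrightarrow> - x \<in> I"
  using I_smul[of x "-1"] by (simp only: smul_minus_one)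

definition eqv (infix "\<approx>" 50) where
  "x \<approx> y \<longleftrightarrow> x \<in> FA \<and> y \<in> FA \<and> x - y \<in> I"

lemma eqv_refl [intro]: "x \<in> FA \<Longrightarrow> x \<approx> x"
  using I_zero by (simp add: eqv_def)

lemma eqv_sym: "x \<approx> y \<Longrightarrow> y \<approx> x"
  using I_uminus[of "x - y"] by (simp add: eqv_def)

lemma eqv_trans [trans]: "x \<approx> y \<Longrightarrow> y \<approx> z \<Longrightarrow> x \<approx> z"
  using I_add[of "x - y" "y - z"] by (simp add: eqv_def)

lemma eqv_trans_eq1 [trans]: "x = y \<Longrightarrow> y \<approx> z \<Longrightarrow> x \<approx> z" by simp
lemma eqv_trans_eq2 [trans]: "x \<approx> y \<Longrightarrow> y = z \<Longrightarrow> x \<approx> z" by simp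

lemma eqv_FA1: "x \<approx> y \<Longrightarrow> x \<in> FA" by (simp add: eqv_def)
lemma eqv_FA2: "x \<approx> y \<Longrightarrow> y \<in> FA" by (simp add: eqv_def)

lemma eqv_add: "x \<approx> x' \<Longrightarrow> y \<approx> y' \<Longrightarrow> x + y \<approx> x' + y'"
  using I_add[of "x - x'" "y - y'"] by (simp add: eqv_def algebra_simps)

lemma eqv_smul: "x \<approx> x' \<Longrightarrow> smul c x \<approx> smul c x'"
proof -
  assume "x \<approx> x'"
  moreover have "smul c x - smul c x' = smul c (x - x')"
    by (simp add: smul_def fun_eq_iff right_diff_distrib)
  ultimately show ?thesis using I_smul unfolding eqv_def by auto
qed

lemma eqv_mult: "x \<approx> x' \<Longrightarrow> y \<approx> y' \<Longrightarrow> x \<odot> y \<approx> x' \<odot> y'"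
proof -
  assume "x \<approx> x'" "y \<approx> y'"
  moreover have "x \<odot> y - x' \<odot> y' = (x - x') \<odot> y + x' \<odot> (y - y')"
    by (simp add: fa_mult_diff_left fa_mult_diff_right)
  ultimately show ?thesis using I_add[OF I_rmult I_lmult] unfolding eqv_def by auto
qed

lemma eqv_zero_iff: "x \<approx> 0 \<longleftrightarrow> x \<in> I"
  using I_FA by (auto simp: eqv_def)

lemma eqv_sum: "(\<And>a. a \<in> A \<Longrightarrow> f a \<approx> g a) \<Longrightarrow> (\<Sum>a\<in>A. f a) \<approx> (\<Sum>a\<in>A. g a)"
  by (induction A rule: infinite_finite_induct) (simp_all add: eqv_add eqv_refl)

lemma eqv_sum_list:
  "(\<And>e. e \<in> set L \<Longrightarrow> f e \<approx> g e) \<Longrightarrow> sum_list (map f L) \<approx> sum_list (map g L)"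
  by (induction L) (simp_all add: eqv_add eqv_refl)

definition \<theta>' :: "'h \<Rightarrow> 'h" where "\<theta>' = inv \<theta>"

lemma \<iota>_1 [simp]: "\<iota> 1 = 1"
  and \<iota>_add: "\<iota> (a + b) = \<iota> a + \<iota> b"
  and \<iota>_mult: "\<iota> (a * b) = \<iota> a * \<iota> b"
  using alg_map unfolding is_alg_map_def by auto

lemma \<iota>_0 [simp]: "\<iota> 0 = 0"
  using \<iota>_add[of 0 0] by simp

lemma \<iota>_diff: "\<iota> (a - b) = \<iota> a - \<iota> b"
  using \<iota>_add[of "a - b" b] by (simp add: eq_diff_eq)

lemma \<theta>_bij: "bij \<theta>"
  and \<theta>_1 [simp]: "\<theta> 1 = 1"
  and \<theta>_add: "\<theta> (a + b) = \<theta> a + \<theta> b"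
  and \<theta>_mult: "\<theta> (a * b) = \<theta> a * \<theta> b"
  and \<theta>_\<iota> [simp]: "\<theta> (\<iota> c) = \<iota> c"
  using automorphism unfolding is_alg_automorphism_def by auto

lemma \<theta>_0 [simp]: "\<theta> 0 = 0"
  using \<theta>_add[of 0 0] by simp

lemma \<theta>_\<theta>' [simp]: "\<theta> (\<theta>' x) = x"
  unfolding \<theta>'_def using \<theta>_bij by (simp add: bij_is_surj surj_f_inv_f)

lemma \<theta>'_\<theta> [simp]: "\<theta>' (\<theta> x) = x"
  unfolding \<theta>'_def using \<theta>_bij by (simp add: bij_is_inj inv_f_f)

lemma \<theta>'_add: "\<theta>' (a + b) = \<theta>' a + \<theta>' b"
  by (metis \<theta>_\<theta>' \<theta>'_\<theta> \<theta>_add)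

lemma \<theta>'_mult: "\<theta>' (a * b) = \<theta>' a * \<theta>' b"
  by (metis \<theta>_\<theta>' \<theta>'_\<theta> \<theta>_mult)

lemma \<theta>'_1 [simp]: "\<theta>' 1 = 1"
  by (metis \<theta>'_\<theta> \<theta>_1)

lemma \<theta>'_0 [simp]: "\<theta>' 0 = 0"
  by (metis \<theta>'_\<theta> \<theta>_0)

lemma \<theta>'_\<iota> [simp]: "\<theta>' (\<iota> c) = \<iota> c"
  by (metis \<theta>'_\<theta> \<theta>_\<iota>)

lemma \<theta>_unit: "x dvd 1 \<Longrightarrow> \<theta> x dvd 1"
  by (metis \<theta>_1 \<theta>_mult dvd_def)

lemma \<theta>'_unit: "x dvd 1 \<Longrightarrow> \<theta>' x dvd 1"
  by (metis \<theta>'_1 \<theta>'_mult dvd_def)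

lemma gwa_rel_eqv: "fa_diff x y \<in> gwa_rels \<iota> \<theta> z0 z1 \<Longrightarrow> x \<in> FA \<Longrightarrow> y \<in> FA \<Longrightarrow> x \<approx> y"
  unfolding eqv_def gwa_ideal_def fa_diff_eq[symmetric] by (blast intro: ideal_gen.base)

lemma mon_eqv_in_context: "mon x \<approx> y \<Longrightarrow> mon (u @ x @ w) \<approx> mon u \<odot> y \<odot> mon w"
  using eqv_mult[OF eqv_mult[OF eqv_refl] eqv_refl, of "mon u" "mon x" y "mon w"]
  by (simp add: mon_mult)

lemma mon_GH_add: "mon (u @ GH (a + b) # w) \<approx> mon (u @ GH a # w) + mon (u @ GH b # w)"
proof -
  have "mon [GH (a + b)] \<approx> mon [GH a] + mon [GH b]"
    by (rule gwa_rel_eqv) (auto simp: gwa_rels_def fa_gen_eq fa_add_eq)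
  from mon_eqv_in_context[OF this, of u w] show ?thesis
    by (simp add: fa_mult_add_left fa_mult_add_right mon_mult)
qed

lemma mon_GH_mult: "mon (u @ GH a # GH b # w) \<approx> mon (u @ GH (a * b) # w)"
proof -
  have "mon [GH (a * b)] \<approx> mon [GH a] \<odot> mon [GH b]"
    by (rule gwa_rel_eqv) (auto simp: gwa_rels_def fa_gen_eq)
  from mon_eqv_in_context[OF this, of u w] show ?thesis
    by (simp add: mon_mult eqv_sym)
qed

lemma smul_mon_GH: "smul c (mon (u @ GH a # w)) \<approx> mon (u @ GH (\<iota> c * a) # w)"
proof -
  have "mon [GH (\<iota> c * a)] \<approx> fa_scal c \<odot> mon [GH a]"
    by (rule gwa_rel_eqv) (auto simp: gwa_rels_def fa_gen_eq)
  from mon_eqv_in_context[OF this, of u w] show ?thesis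
    by (simp add: fa_scal_mult mon_mult eqv_sym fa_mult_smul_left fa_mult_smul_right)
qed

lemma mon_GH_one: "mon (u @ GH 1 # w) \<approx> mon (u @ w)"
proof -
  have "mon [GH 1] \<approx> fa_scal 1"
    by (rule gwa_rel_eqv) (auto simp: gwa_rels_def fa_gen_eq)
  then have "mon [GH 1] \<approx> mon []"
    by (simp add: fa_scal_eq smul_def)
  from mon_eqv_in_context[OF this, of u w] show ?thesis
    by (simp add: mon_mult)
qed

lemma mon_GU_GH: "mon (u @ GU # GH h # w) \<approx> mon (u @ GH (\<theta> h) # GU # w)"
proof -
  have "mon [GU] \<odot> mon [GH h] \<approx> mon [GH (\<theta> h)] \<odot> mon [GU]"
    by (rule gwa_rel_eqv) (auto simp: gwa_rels_def fa_gen_eq)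
  from mon_eqv_in_context[OF this[unfolded mon_mult], of u w] show ?thesis
    by (simp add: mon_mult)
qed

lemma mon_GD_GH: "mon (u @ GD # GH h # w) \<approx> mon (u @ GH (\<theta>' h) # GD # w)"
proof -
  have "mon [GH (\<theta>' h)] \<odot> mon [GD] \<approx> mon [GD] \<odot> mon [GH (\<theta> (\<theta>' h))]"
    by (rule gwa_rel_eqv) (auto simp: gwa_rels_def fa_gen_eq simp del: \<theta>_\<theta>')
  from mon_eqv_in_context[OF this[unfolded mon_mult], of u w] show ?thesis
    by (simp add: mon_mult eqv_sym)
qed

lemma mon_GU_GD: "mon (u @ GU # GD # w) \<approx> mon (u @ GH z0 # w) + mon (u @ GD # GH z1 # GU # w)"
proof -
  have "mon [GU] \<odot> mon [GD] \<approx> mon [GH z0] + mon [GD] \<odot> mon [GH z1] \<odot> mon [GU]"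
    by (rule gwa_rel_eqv) (auto simp: gwa_rels_def fa_gen_eq fa_add_eq)
  from mon_eqv_in_context[OF this[unfolded mon_mult], of u w] show ?thesis
    by (simp add: fa_mult_add_left fa_mult_add_right mon_mult)
qed

lemma mon_GH_zero: "mon (u @ GH 0 # w) \<approx> 0"
proof -
  let ?x = "mon (u @ GH 0 # w) :: ('f, 'h) fa"
  have "?x - (?x + ?x) \<in> I" using mon_GH_add[of u 0 0 w] by (simp add: eqv_def)
  then show ?thesis using I_uminus eqv_zero_iff by fastforce
qed

lemma mon_GD_GH_GH: "mon (u @ GD # GH a # GH b # w) \<approx> mon (u @ GH (\<theta>' (a * b)) # GD # w)"
proof -
  have "mon (u @ GD # GH a # GH b # w) \<approx> mon (u @ GD # GH (a * b) # w)"
    using mon_GH_mult[of "u @ [GD]" a b w] by simp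
  also have "\<dots> \<approx> mon (u @ GH (\<theta>' (a * b)) # GD # w)" by (rule mon_GD_GH)
  finally show ?thesis .
qed

section \<open>Normal forms\<close>

text \<open>In A one has u d^i = \<alpha> i d^(i-1) + \<gamma> i d^i u; for i = 0 the first summand is
  0 = \<alpha> 0, which makes the truncated exponent i - 1 harmless.\<close>

primrec \<alpha> :: "nat \<Rightarrow> 'h" where
  "\<alpha> 0 = 0"
| "\<alpha> (Suc i) = z0 + \<theta>' (z1 * \<alpha> i)"

primrec \<gamma> :: "nat \<Rightarrow> 'h" where
  "\<gamma> 0 = 1"
| "\<gamma> (Suc i) = \<theta>' (z1 * \<gamma> i)"

lemma \<gamma>_unit: "\<gamma> n dvd 1"
  by (induction n) (simp_all add: \<theta>'_unit unit_mult z1_unit)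

lemma mon_GU_GD_pow:
  "mon (u @ GU # replicate i GD @ w) \<approx>
     mon (u @ GH (\<alpha> i) # replicate (i - 1) GD @ w) + mon (u @ GH (\<gamma> i) # replicate i GD @ GU # w)"
proof (induction i arbitrary: u w)
  case 0
  have "mon (u @ GH 0 # w) + mon (u @ GH 1 # GU # w) \<approx> 0 + mon (u @ GU # w)"
    by (rule eqv_add[OF mon_GH_zero mon_GH_one])
  from eqv_sym[OF this] show ?case
    by (simp only: add_0_left \<alpha>.simps \<gamma>.simps diff_0_eq_0 replicate_0 append_Nil)
next
  case (Suc i)
  let ?A = "mon (u @ GH z0 # replicate i GD @ w) :: ('f, 'h) fa"
  let ?B = "mon (u @ GH (\<theta>' (z1 * \<alpha> i)) # GD # replicate (i - 1) GD @ w) :: ('f, 'h) fa"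
  let ?C = "mon (u @ GH (\<gamma> (Suc i)) # GD # replicate i GD @ GU # w) :: ('f, 'h) fa"
  have "mon (u @ GU # replicate (Suc i) GD @ w)
      \<approx> ?A + mon ((u @ [GD, GH z1]) @ GU # replicate i GD @ w)"
    using mon_GU_GD[of u "replicate i GD @ w"] by simp
  also have "\<dots> \<approx> ?A + (?B + ?C)"
  proof (rule eqv_add[OF eqv_refl])
    have "mon ((u @ [GD, GH z1]) @ GU # replicate i GD @ w) \<approx>
        mon ((u @ [GD, GH z1]) @ GH (\<alpha> i) # replicate (i - 1) GD @ w)
        + mon ((u @ [GD, GH z1]) @ GH (\<gamma> i) # replicate i GD @ GU # w)"
      by (rule Suc.IH)
    also have "\<dots> \<approx> ?B + ?C"
      using eqv_add[OF mon_GD_GH_GH[of u z1 "\<alpha> i" "replicate (i - 1) GD @ w"]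
          mon_GD_GH_GH[of u z1 "\<gamma> i" "replicate i GD @ GU # w"]]
      by simp
    finally show "mon ((u @ [GD, GH z1]) @ GU # replicate i GD @ w) \<approx> ?B + ?C" .
  qed simp
  also have "\<dots> \<approx> mon (u @ GH (\<alpha> (Suc i)) # replicate i GD @ w) + ?C"
  proof (cases i)
    case 0
    have "?A + (?B + ?C) \<approx> ?A + (0 + ?C)"
      using 0 by (intro eqv_add eqv_refl) (simp_all add: mon_GH_zero)
    then show ?thesis using 0 by simp
  next
    case (Suc n)
    have "?A + ?B \<approx> mon (u @ GH (\<alpha> (Suc i)) # replicate i GD @ w)"
      using Suc eqv_sym[OF mon_GH_add[of u z0 "\<theta>' (z1 * \<alpha> i)" "replicate i GD @ w"]] by simp
    then show ?thesis by (simp add: add.assoc[symmetric] eqv_add eqv_refl)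
  qed
  finally show ?case by (simp only: diff_Suc_1 replicate_Suc append_Cons)
qed

definition nf_word :: "nat \<Rightarrow> nat \<Rightarrow> 'h gsym list" where
  "nf_word i j = replicate i GD @ replicate j GU"

definition nf :: "'h \<Rightarrow> nat \<Rightarrow> nat \<Rightarrow> ('f, 'h) fa" where
  "nf h i j = mon (GH h # nf_word i j)"

definition nf_sum :: "('h \<times> nat \<times> nat) list \<Rightarrow> ('f, 'h) fa" where
  "nf_sum L = sum_list (map (\<lambda>(h, i, j). nf h i j) L)"

lemma FA_nf [simp]: "nf h i j \<in> FA" by (simp add: nf_def)
lemma FA_nf_sum [simp]: "nf_sum L \<in> FA"
  unfolding nf_sum_def by (rule FA_sum_list) (auto split: prod.split)
lemma nf_sum_Nil [simp]: "nf_sum [] = 0" by (simp add: nf_sum_def)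
lemma nf_sum_Cons: "nf_sum ((h, i, j) # L) = nf h i j + nf_sum L" by (simp add: nf_sum_def)
lemma nf_sum_append: "nf_sum (L @ L') = nf_sum L + nf_sum L'" by (simp add: nf_sum_def)
lemma nf_sum_concat: "nf_sum (concat (map f L)) = sum_list (map (\<lambda>e. nf_sum (f e)) L)"
  by (induction L) (simp_all add: nf_sum_append)

fun nf_step :: "'h gsym \<Rightarrow> 'h \<times> nat \<times> nat \<Rightarrow> ('h \<times> nat \<times> nat) list" where
  "nf_step (GH g) (h, i, j) = [(g * h, i, j)]"
| "nf_step GD (h, i, j) = [(\<theta>' h, Suc i, j)]"
| "nf_step GU (h, i, j) = [(\<theta> h * \<alpha> i, i - 1, j), (\<theta> h * \<gamma> i, i, Suc j)]"

lemma mon_letter_nf: "mon [x] \<odot> nf h i j \<approx> nf_sum (nf_step x (h, i, j))"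
proof (cases x)
  case (GH g)
  then show ?thesis
    using mon_GH_mult[of "[]" g h "nf_word i j"] by (simp add: nf_sum_def nf_def mon_mult)
next
  case GD
  then show ?thesis
    using mon_GD_GH[of "[]" h "nf_word i j"] by (simp add: nf_sum_def nf_def nf_word_def mon_mult)
next
  case GU
  have "mon [x] \<odot> nf h i j \<approx> mon ([GH (\<theta> h)] @ GU # replicate i GD @ replicate j GU)"
    using GU mon_GU_GH[of "[]" h "nf_word i j"] by (simp add: nf_def nf_word_def mon_mult)
  also have "\<dots> \<approx> mon ([] @ GH (\<theta> h) # GH (\<alpha> i) # nf_word (i - 1) j)
      + mon ([] @ GH (\<theta> h) # GH (\<gamma> i) # nf_word i (Suc j))"
    using mon_GU_GD_pow[of "[GH (\<theta> h)]" i "replicate j GU"]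
    by (simp add: nf_word_def replicate_append_same)
  also have "\<dots> \<approx> nf_sum (nf_step x (h, i, j))"
    using GU eqv_add[OF mon_GH_mult[of "[]"] mon_GH_mult[of "[]"]] by (simp add: nf_sum_def nf_def)
  finally show ?thesis .
qed

fun nf_of_word :: "'h gsym list \<Rightarrow> ('h \<times> nat \<times> nat) list" where
  "nf_of_word [] = [(1, 0, 0)]"
| "nf_of_word (x # w) = concat (map (nf_step x) (nf_of_word w))"

lemma mon_eqv_nf_of_word: "mon w \<approx> nf_sum (nf_of_word w)"
proof (induction w)
  case Nil
  show ?case using eqv_sym[OF mon_GH_one[of "[]" "[]"]] by (simp add: nf_sum_def nf_def nf_word_def)
next
  case (Cons x w)
  have "mon (x # w) \<approx> mon [x] \<odot> nf_sum (nf_of_word w)"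
    using eqv_mult[OF eqv_refl Cons.IH, of "mon [x]"] by (simp add: mon_mult)
  also have "\<dots> = sum_list (map (\<lambda>(h, i, j). mon [x] \<odot> nf h i j) (nf_of_word w))"
    by (simp add: nf_sum_def fa_mult_sum_list_right case_prod_unfold)
  also have "\<dots> \<approx> sum_list (map (\<lambda>e. nf_sum (nf_step x e)) (nf_of_word w))"
    by (rule eqv_sum_list) (auto simp: mon_letter_nf)
  also have "\<dots> = nf_sum (nf_of_word (x # w))"
    by (simp add: nf_sum_concat)
  finally show ?case .
qed

lemma smul_nf_sum: "smul c (nf_sum L) \<approx> nf_sum (map (\<lambda>(h, i, j). (\<iota> c * h, i, j)) L)"
proof -
  have "smul c (nf_sum L) = sum_list (map (\<lambda>(h, i, j). smul c (nf h i j)) L)"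
    by (simp add: nf_sum_def smul_sum_list case_prod_unfold)
  also have "\<dots> \<approx> sum_list (map (\<lambda>(h, i, j). nf (\<iota> c * h) i j) L)"
    by (rule eqv_sum_list) (auto simp: nf_def smul_mon_GH[of c "[]", simplified])
  also have "\<dots> = nf_sum (map (\<lambda>(h, i, j). (\<iota> c * h, i, j)) L)"
    by (simp add: nf_sum_def comp_def case_prod_unfold)
  finally show ?thesis .
qed

lemma FA_eqv_nf_sum:
  assumes "p \<in> FA"
  shows "\<exists>L. p \<approx> nf_sum L"
proof -
  have "\<exists>L. (\<Sum>w\<in>A. smul (p w) (mon w)) \<approx> nf_sum L" if "finite A" for A
    using that
  proof (induction A rule: finite_induct)
    case empty
    show ?case by (metis nf_sum_Nil sum.empty eqv_refl FA_zero)
  next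
    case (insert x F)
    then obtain L where L: "(\<Sum>w\<in>F. smul (p w) (mon w)) \<approx> nf_sum L" by blast
    have "smul (p x) (mon x) \<approx> smul (p x) (nf_sum (nf_of_word x))"
      by (rule eqv_smul[OF mon_eqv_nf_of_word])
    also note smul_nf_sum
    finally have "smul (p x) (mon x) + (\<Sum>w\<in>F. smul (p w) (mon w))
        \<approx> nf_sum (map (\<lambda>(h, i, j). (\<iota> (p x) * h, i, j)) (nf_of_word x)) + nf_sum L"
      using L by (rule eqv_add)
    then show ?case
      unfolding sum.insert[OF insert(1,2)] nf_sum_append[symmetric] by blast
  qed
  moreover have "finite {w. p w \<noteq> 0}" using assms by (simp add: FA_def)
  ultimately obtain L where "(\<Sum>w | p w \<noteq> 0. smul (p w) (mon w)) \<approx> nf_sum L" by blast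
  then have "p \<approx> nf_sum L" unfolding fa_expand_mon[OF assms, symmetric] .
  then show ?thesis by (rule exI)
qed

section \<open>Reading off normal-form coefficients\<close>

text \<open>The vector basis_vec a b stands for d^a u^b; lmul_vec h, d_op and u_op are left
  multiplication by h, d and u on the normal forms h d^a u^b (u_op by way of
  u h d^a = \<theta> h (\<alpha> a d^(a-1) + \<gamma> a d^a u)). Hence coeffs p lists the normal-form coefficients
  of p.\<close>

definition d_op :: "'h vec \<Rightarrow> 'h vec" where
  "d_op v = (\<lambda>(a, b). if a = 0 then 0 else \<theta>' (v (a - 1, b)))"

definition u_op :: "'h vec \<Rightarrow> 'h vec" where
  "u_op v = (\<lambda>(a, b). \<theta> (v (Suc a, b)) * \<alpha> (Suc a) + (if b = 0 then 0 else \<theta> (v (a, b - 1)) * \<gamma> a))"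

fun letter_op :: "'h gsym \<Rightarrow> 'h vec \<Rightarrow> 'h vec" where
  "letter_op (GH h) = lmul_vec h"
| "letter_op GD = d_op"
| "letter_op GU = u_op"

fun word_op :: "'h gsym list \<Rightarrow> 'h vec \<Rightarrow> 'h vec" where
  "word_op [] v = v"
| "word_op (x # w) v = letter_op x (word_op w v)"

definition act :: "('f, 'h) fa \<Rightarrow> 'h vec \<Rightarrow> 'h vec" where
  "act p v = (\<Sum>w | p w \<noteq> 0. lmul_vec (\<iota> (p w)) (word_op w v))"

lemma letter_op_add: "letter_op x (v + w) = letter_op x v + letter_op x w"
  by (cases x) (auto simp: lmul_vec_add d_op_def u_op_def fun_eq_iff algebra_simps \<theta>_add \<theta>'_add)

lemma letter_op_lmul_\<iota>: "letter_op x (lmul_vec (\<iota> c) v) = lmul_vec (\<iota> c) (letter_op x v)"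
  by (cases x) (auto simp: lmul_vec_def d_op_def u_op_def fun_eq_iff distrib_left \<theta>_mult \<theta>'_mult
      mult.left_commute mult.assoc)

lemma letter_op_zero [simp]: "letter_op x 0 = 0"
  by (cases x) (auto simp: d_op_def u_op_def fun_eq_iff)

text \<open>The induction method would present v + v' eta-expanded, which blocks letter_op_add;
  hence the explicit list.induct.\<close>

lemma word_op_add: "word_op w (v + v') = word_op w v + word_op w v'"
  by (rule list.induct[of "\<lambda>w. word_op w (v + v') = word_op w v + word_op w v'" w])
    (simp_all add: letter_op_add)

lemma word_op_lmul_\<iota>: "word_op w (lmul_vec (\<iota> c) v) = lmul_vec (\<iota> c) (word_op w v)"
  by (induction w) (simp_all add: letter_op_lmul_\<iota>)

lemma word_op_zero [simp]: "word_op w 0 = 0"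
  by (rule list.induct[of "\<lambda>w. word_op w 0 = 0" w]) simp_all

lemma word_op_sum: "word_op w (\<Sum>a\<in>A. f a) = (\<Sum>a\<in>A. word_op w (f a))"
  by (rule infinite_finite_induct[of "\<lambda>A. word_op w (\<Sum>a\<in>A. f a) = (\<Sum>a\<in>A. word_op w (f a))" A])
    (simp_all add: word_op_add)

lemma word_op_append: "word_op (a @ b) v = word_op a (word_op b v)"
  by (induction a) simp_all

lemma word_op_replicate: "word_op (replicate i x) v = (letter_op x ^^ i) v"
  by (induction i) simp_all

lemma act_superset:
  "finite S \<Longrightarrow> {w. p w \<noteq> 0} \<subseteq> S \<Longrightarrow> act p v = (\<Sum>w\<in>S. lmul_vec (\<iota> (p w)) (word_op w v))"
  unfolding act_def by (rule sum.mono_neutral_left) auto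

lemma act_add:
  assumes "p \<in> FA" "q \<in> FA"
  shows "act (p + q) v = act p v + act q v"
proof -
  let ?S = "{w. p w \<noteq> 0} \<union> {w. q w \<noteq> 0}"
  have S: "finite ?S" using assms by (simp add: FA_def)
  have "act (p + q) v = (\<Sum>w\<in>?S. lmul_vec (\<iota> ((p + q) w)) (word_op w v))"
    by (rule act_superset[OF S]) auto
  also have "\<dots> = (\<Sum>w\<in>?S. lmul_vec (\<iota> (p w)) (word_op w v)) + (\<Sum>w\<in>?S. lmul_vec (\<iota> (q w)) (word_op w v))"
    by (simp add: \<iota>_add lmul_vec_add_left sum.distrib)
  also have "\<dots> = act p v + act q v"
    by (simp add: act_superset[OF S])
  finally show ?thesis .
qed

lemma act_diff:
  assumes "p \<in> FA" "q \<in> FA"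
  shows "act (p - q) v = act p v - act q v"
proof -
  let ?S = "{w. p w \<noteq> 0} \<union> {w. q w \<noteq> 0}"
  have S: "finite ?S" using assms by (simp add: FA_def)
  have "act (p - q) v = (\<Sum>w\<in>?S. lmul_vec (\<iota> ((p - q) w)) (word_op w v))"
    by (rule act_superset[OF S]) auto
  also have "\<dots> = (\<Sum>w\<in>?S. lmul_vec (\<iota> (p w)) (word_op w v)) - (\<Sum>w\<in>?S. lmul_vec (\<iota> (q w)) (word_op w v))"
    by (simp add: \<iota>_diff lmul_vec_diff_left sum_subtractf)
  also have "\<dots> = act p v - act q v"
    by (simp add: act_superset[OF S])
  finally show ?thesis .
qed

lemma act_smul:
  assumes "p \<in> FA"
  shows "act (smul c p) v = lmul_vec (\<iota> c) (act p v)"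
proof -
  have "finite {w. p w \<noteq> 0}" using assms by (simp add: FA_def)
  then have "act (smul c p) v = (\<Sum>w | p w \<noteq> 0. lmul_vec (\<iota> (smul c p w)) (word_op w v))"
    by (rule act_superset) (auto simp: smul_def)
  then show ?thesis by (simp add: act_def smul_def lmul_vec_sum \<iota>_mult lmul_vec_mult)
qed

lemma act_mon: "act (mon w) v = word_op w v"
  using act_superset[of "{w}" "mon w" v] by (auto simp: mon_def)

lemma act_zero [simp]: "act 0 v = 0"
  by (simp add: act_def)

lemma act_zero_vec [simp]: "act p 0 = 0"
  by (simp add: act_def)

lemma act_sum: "(\<And>a. a \<in> A \<Longrightarrow> f a \<in> FA) \<Longrightarrow> act (\<Sum>a\<in>A. f a) v = (\<Sum>a\<in>A. act (f a) v)"
  by (induction A rule: infinite_finite_induct) (simp_all add: act_add)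

lemma act_mult:
  assumes "p \<in> FA" "q \<in> FA"
  shows "act (p \<odot> q) v = act p (act q v)"
proof -
  let ?P = "{w. p w \<noteq> 0}" and ?Q = "{w. q w \<noteq> 0}"
  have "(\<Sum>a\<in>?P. smul (p a) (mon a)) \<odot> (\<Sum>b\<in>?Q. smul (q b) (mon b))
      = (\<Sum>b\<in>?Q. \<Sum>a\<in>?P. smul (q b * p a) (mon (a @ b)))"
    by (simp add: fa_mult_sum_left fa_mult_sum_right fa_mult_smul_left fa_mult_smul_right mon_mult
        smul_sum smul_smul)
  then have "p \<odot> q = (\<Sum>b\<in>?Q. \<Sum>a\<in>?P. smul (q b * p a) (mon (a @ b)))"
    by (simp only: fa_expand_mon[OF assms(1), symmetric] fa_expand_mon[OF assms(2), symmetric])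
  then have "act (p \<odot> q) v
      = (\<Sum>b\<in>?Q. \<Sum>a\<in>?P. lmul_vec (\<iota> (q b * p a)) (word_op a (word_op b v)))"
    by (simp add: act_sum act_smul act_mon word_op_append)
  also have "\<dots> = (\<Sum>a\<in>?P. \<Sum>b\<in>?Q. lmul_vec (\<iota> (p a)) (lmul_vec (\<iota> (q b)) (word_op a (word_op b v))))"
    by (subst sum.swap) (simp add: \<iota>_mult lmul_vec_mult mult.commute)
  also have "\<dots> = act p (act q v)"
    by (simp add: act_def word_op_sum word_op_lmul_\<iota> lmul_vec_sum)
  finally show ?thesis .
qed

lemma u_op_lmul_vec: "u_op (lmul_vec h v) = lmul_vec (\<theta> h) (u_op v)"
  by (auto simp: u_op_def lmul_vec_def fun_eq_iff \<theta>_mult distrib_left mult.assoc)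

lemma lmul_vec_d_op: "lmul_vec h (d_op v) = d_op (lmul_vec (\<theta> h) v)"
  by (auto simp: d_op_def lmul_vec_def fun_eq_iff \<theta>'_mult)

lemma u_op_d_op: "u_op (d_op v) = lmul_vec z0 v + d_op (lmul_vec z1 (u_op v))"
proof (rule ext, clarify)
  fix a b
  show "u_op (d_op v) (a, b) = (lmul_vec z0 v + d_op (lmul_vec z1 (u_op v))) (a, b)"
    by (cases a) (simp_all add: u_op_def d_op_def lmul_vec_def \<theta>'_mult \<theta>'_add algebra_simps)
qed

lemma act_gwa_rels: "r \<in> gwa_rels \<iota> \<theta> z0 z1 \<Longrightarrow> act r v = 0"
  unfolding gwa_rels_def
  by (auto simp: fa_gen_eq fa_diff_eq fa_add_eq fa_scal_eq fa_mult_smul_left mon_mult act_diff act_add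
      act_smul act_mon lmul_vec_add_left lmul_vec_mult u_op_lmul_vec lmul_vec_d_op u_op_d_op)

lemma act_I: "x \<in> I \<Longrightarrow> act x v = 0"
proof -
  assume "x \<in> I"
  then have "x \<in> ideal_gen (gwa_rels \<iota> \<theta> z0 z1)" by (simp add: gwa_ideal_def)
  then have "\<forall>v. act x v = 0"
  proof (induction rule: ideal_gen.induct[where P = "\<lambda>x. \<forall>v. act x v = 0"])
    case (add x y)
    then show ?case using I_FA by (simp add: gwa_ideal_def fa_add_eq act_add)
  next
    case (lmult a x)
    then show ?case using I_FA by (simp add: gwa_ideal_def act_mult)
  next
    case (rmult a x)
    then show ?case using I_FA by (simp add: gwa_ideal_def act_mult)
  qed (simp_all add: act_gwa_rels fa_zero_eq)
  then show ?thesis ..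
qed

lemma act_eqv: "x \<approx> y \<Longrightarrow> act x v = act y v"
  using act_I[of "x - y" v] act_diff[of x y v] by (simp add: eqv_def)

definition coeffs :: "('f, 'h) fa \<Rightarrow> 'h vec" where
  "coeffs p = act p (basis_vec 0 0)"

definition nf_expansion :: "'h vec \<Rightarrow> (nat \<times> nat) set \<Rightarrow> ('f, 'h) fa" where
  "nf_expansion c P = (\<Sum>y\<in>P. nf (c y) (fst y) (snd y))"

lemma d_op_basis_vec: "d_op (basis_vec a b) = basis_vec (Suc a) b"
  by (auto simp: d_op_def basis_vec_def fun_eq_iff)

lemma u_op_basis_vec_0: "u_op (basis_vec 0 b) = basis_vec 0 (Suc b)"
  by (auto simp: u_op_def basis_vec_def fun_eq_iff)

lemma act_nf: "act (nf h i j) v = lmul_vec h ((d_op ^^ i) ((u_op ^^ j) v))"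
  by (simp add: nf_def act_mon nf_word_def word_op_append word_op_replicate)

lemma coeffs_nf: "coeffs (nf h i j) = (\<lambda>y. if y = (i, j) then h else 0)"
proof -
  have "(u_op ^^ j) (basis_vec 0 0) = basis_vec 0 j"
    by (induction j) (simp_all add: u_op_basis_vec_0)
  moreover have "(d_op ^^ i) (basis_vec 0 j) = basis_vec i j"
    by (induction i) (simp_all add: d_op_basis_vec)
  ultimately have "coeffs (nf h i j) = lmul_vec h (basis_vec i j)"
    by (simp add: coeffs_def act_nf)
  then show ?thesis
    by (auto simp: lmul_vec_def basis_vec_def)
qed

lemma coeffs_zero [simp]: "coeffs 0 = 0"
  by (simp add: coeffs_def)

lemma coeffs_add: "p \<in> FA \<Longrightarrow> q \<in> FA \<Longrightarrow> coeffs (p + q) = coeffs p + coeffs q"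
  by (simp add: coeffs_def act_add)

lemma coeffs_diff: "p \<in> FA \<Longrightarrow> q \<in> FA \<Longrightarrow> coeffs (p - q) = coeffs p - coeffs q"
  by (simp add: coeffs_def act_diff)

lemma coeffs_mult: "p \<in> FA \<Longrightarrow> q \<in> FA \<Longrightarrow> coeffs (p \<odot> q) = act p (coeffs q)"
  by (simp add: coeffs_def act_mult)

lemma coeffs_eqv: "x \<approx> y \<Longrightarrow> coeffs x = coeffs y"
  by (simp add: coeffs_def act_eqv)

lemma coeffs_nf_sum: "coeffs (nf_sum L) y = sum_list (map (\<lambda>(h, i, j). if y = (i, j) then h else 0) L)"
proof (induction L)
  case Nil
  show ?case by (simp only: nf_sum_Nil coeffs_zero) simp
next
  case (Cons e L)
  obtain h i j where e: "e = (h, i, j)" by (cases e)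
  have "coeffs (nf_sum (e # L)) = coeffs (nf h i j) + coeffs (nf_sum L)"
    by (simp only: e nf_sum_Cons coeffs_add[OF FA_nf FA_nf_sum])
  then show ?case using Cons.IH by (simp add: e coeffs_nf)
qed

lemma nf_add: "nf (a + b) i j \<approx> nf a i j + nf b i j"
  using mon_GH_add[of "[]"] by (simp add: nf_def)

lemma nf_zero: "nf 0 i j \<approx> 0"
  using mon_GH_zero[of "[]"] by (simp add: nf_def)

lemma nf_expansion_zero: "(\<And>y. y \<in> P \<Longrightarrow> c y = 0) \<Longrightarrow> nf_expansion c P \<approx> 0"
  using eqv_sum[of P "\<lambda>y. nf (c y) (fst y) (snd y)" "\<lambda>_. 0"] nf_zero
  by (simp add: nf_expansion_def)

lemma nf_expansion_single:
  assumes "finite P" "(i, j) \<in> P"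
  shows "nf_expansion (\<lambda>y. if y = (i, j) then h else 0) P \<approx> nf h i j"
proof -
  let ?c = "\<lambda>y. if y = (i, j) then h else 0"
  have "nf_expansion ?c P = nf h i j + nf_expansion ?c (P - {(i, j)})"
    using assms by (simp add: nf_expansion_def sum.remove)
  also have "\<dots> \<approx> nf h i j + 0"
    by (intro eqv_add eqv_refl nf_expansion_zero) auto
  finally show ?thesis by simp
qed

lemma nf_expansion_add:
  "finite P \<Longrightarrow> nf_expansion (c + c') P \<approx> nf_expansion c P + nf_expansion c' P"
  unfolding nf_expansion_def sum.distrib[symmetric] by (intro eqv_sum) (simp add: nf_add)

lemma nf_sum_eqv_nf_expansion:
  assumes "finite P" "\<forall>(h, i, j)\<in>set L. (i, j) \<in> P"
  shows "nf_sum L \<approx> nf_expansion (coeffs (nf_sum L)) P"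
  using assms(2)
proof (induction L)
  case Nil
  have "nf_expansion (coeffs (nf_sum [])) P \<approx> 0"
    by (rule nf_expansion_zero) simp
  then show ?case by (simp only: eqv_sym nf_sum_Nil)
next
  case (Cons e L)
  obtain h i j where e: "e = (h, i, j)" by (cases e)
  have "nf_sum (e # L) = nf h i j + nf_sum L" by (simp add: e nf_sum_Cons)
  also have "\<dots> \<approx> nf_expansion (\<lambda>y. if y = (i, j) then h else 0) P + nf_expansion (coeffs (nf_sum L)) P"
    using Cons e by (intro eqv_add eqv_sym[OF nf_expansion_single[OF assms(1)]]) auto
  also have "\<dots> \<approx> nf_expansion (coeffs (nf_sum (e # L))) P"
    using nf_expansion_add[OF assms(1)] eqv_sym
    by (simp add: e nf_sum_Cons coeffs_add coeffs_nf)
  finally show ?case .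
qed

lemma eqv_nf_expansion:
  assumes p: "p \<in> FA" and P: "finite P" and supp: "\<And>y. y \<notin> P \<Longrightarrow> coeffs p y = 0"
  shows "p \<approx> nf_expansion (coeffs p) P"
proof -
  obtain L where L: "p \<approx> nf_sum L" using FA_eqv_nf_sum[OF p] ..
  let ?P = "P \<union> (\<lambda>(h, i, j). (i, j)) ` set L"
  have fin: "finite ?P" using P by simp
  have "\<forall>(h, i, j)\<in>set L. (i, j) \<in> ?P" by force
  then have "p \<approx> nf_expansion (coeffs (nf_sum L)) ?P"
    by (rule eqv_trans[OF L nf_sum_eqv_nf_expansion[OF fin]])
  then have "p \<approx> nf_expansion (coeffs p) ?P"
    by (simp only: coeffs_eqv[OF L])
  also have "nf_expansion (coeffs p) ?P = nf_expansion (coeffs p) (?P - P) + nf_expansion (coeffs p) P"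
    unfolding nf_expansion_def by (rule sum.subset_diff[OF _ fin]) simp
  also have "\<dots> \<approx> 0 + nf_expansion (coeffs p) P"
    using supp by (intro eqv_add eqv_refl nf_expansion_zero) (auto simp: nf_expansion_def)
  finally show ?thesis by simp
qed

lemma coeffs_zero_imp_I: "p \<in> FA \<Longrightarrow> coeffs p = 0 \<Longrightarrow> p \<in> I"
  using eqv_nf_expansion[of p "{}"] by (simp add: nf_expansion_def eqv_zero_iff)

lemma coeffs_support_finite:
  assumes "p \<in> FA"
  shows "finite {y. coeffs p y \<noteq> 0}"
proof -
  obtain L where L: "p \<approx> nf_sum L" using FA_eqv_nf_sum[OF assms] ..
  have "coeffs (nf_sum L) y = 0" if "y \<notin> (\<lambda>(h, i, j). (i, j)) ` set L" for y
    using that unfolding coeffs_nf_sum by (induction L) auto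
  then have "{y. coeffs p y \<noteq> 0} \<subseteq> (\<lambda>(h, i, j). (i, j)) ` set L"
    using coeffs_eqv[OF L] by auto
  then show ?thesis by (rule finite_subset) simp
qed

lemma coeffs_rows_bounded:
  assumes "p \<in> FA"
  obtains N where "\<And>a b. coeffs p (a, b) \<noteq> 0 \<Longrightarrow> b < N"
proof -
  have "finite (snd ` {y. coeffs p y \<noteq> 0})"
    using coeffs_support_finite[OF assms] by simp
  then obtain N where N: "\<forall>b\<in>snd ` {y. coeffs p y \<noteq> 0}. b < N"
    by (auto simp: finite_nat_set_iff_bounded)
  show ?thesis
  proof (rule that)
    fix a b assume "coeffs p (a, b) \<noteq> 0"
    then have "b \<in> snd ` {y. coeffs p y \<noteq> 0}" by force
    with N show "b < N" by blast
  qed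
qed

lemma word_op_line:
  assumes "\<And>a b. v (a, b) \<noteq> 0 \<Longrightarrow> int b - int a = d"
  shows "word_op w v (a, b) \<noteq> 0 \<Longrightarrow> int b - int a = d + word_deg w"
proof (induction w arbitrary: a b rule: word_deg.induct)
  case 1
  then show ?case using assms by simp
next
  case (2 w)
  then have "word_op w v (Suc a, b) \<noteq> 0 \<or> (b \<noteq> 0 \<and> word_op w v (a, b - 1) \<noteq> 0)"
    by (auto simp: u_op_def split: if_splits)
  then show ?case using "2.IH"[of "Suc a" b] "2.IH"[of a "b - 1"] by auto
next
  case (3 w)
  then have "a \<noteq> 0" "word_op w v (a - 1, b) \<noteq> 0"
    by (auto simp: d_op_def split: if_splits)
  then show ?case using "3.IH"[of "a - 1" b] by simp
next
  case (4 h w)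
  then have "word_op w v (a, b) \<noteq> 0" by (auto simp: lmul_vec_def)
  then show ?case using "4.IH" by simp
qed

lemma coeffs_homog_line:
  assumes "p \<in> fa_homog m" "coeffs p (a, b) \<noteq> 0"
  shows "int b - int a = m"
proof -
  have "(\<Sum>w | p w \<noteq> 0. \<iota> (p w) * word_op w (basis_vec 0 0) (a, b)) \<noteq> 0"
    using assms(2) by (simp add: coeffs_def act_def sum_fun_apply lmul_vec_def)
  then obtain w where "p w \<noteq> 0" "\<iota> (p w) * word_op w (basis_vec 0 0) (a, b) \<noteq> 0"
    by (rule sum.not_neutral_contains_not_neutral) simp
  then have w: "p w \<noteq> 0" "word_op w (basis_vec 0 0) (a, b) \<noteq> 0" by auto
  have "int b - int a = 0 + word_deg w"
    by (rule word_op_line[OF _ w(2)]) (simp add: basis_vec_def split: if_splits)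
  then show ?thesis using w(1) assms(1) by (simp add: fa_homog_def)
qed

lemma lead_at_u_op: "lead_at v a b \<Longrightarrow> lead_at (u_op v) a (Suc b)"
  by (auto simp: lead_at_def u_op_def \<theta>_unit \<gamma>_unit unit_mult)

lemma lead_at_d_op: "lead_at v a b \<Longrightarrow> lead_at (d_op v) (Suc a) b"
  by (auto simp: lead_at_def d_op_def \<theta>'_unit)

lemma lead_at_u_op_pow: "lead_at v a b \<Longrightarrow> lead_at ((u_op ^^ j) v) a (b + j)"
  by (induction j) (simp_all add: lead_at_u_op)

lemma lead_at_d_op_pow: "lead_at v a b \<Longrightarrow> lead_at ((d_op ^^ i) v) (a + i) b"
  by (induction i) (simp_all add: lead_at_d_op)

section \<open>Right multiplication by u^m or d^-m\<close>

definition du_word :: "nat \<Rightarrow> 'h gsym list" where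
  "du_word i = concat (replicate i [GD, GU])"

lemma word_deg_du_word: "word_deg (du_word i) = 0"
  by (induction i) (simp_all add: du_word_def)

lemma word_op_du_word: "word_op (du_word i) v = ((d_op \<circ> u_op) ^^ i) v"
  by (induction i) (simp_all add: du_word_def)

lemma mon_du_word_hdu_alg: "mon (GH c # du_word i) \<in> hdu_alg"
proof -
  have "mon (du_word i) \<in> hdu_alg"
  proof (induction i)
    case 0
    show ?case using fa_subalg.scal[of 1] by (simp add: du_word_def fa_scal_def mon_def)
  next
    case (Suc i)
    then show ?case
      using hdu_alg_mult[OF hdu_alg_DU Suc.IH] by (simp add: du_word_def mon_mult)
  qed
  then have "mon [GH c] \<odot> mon (du_word i) \<in> hdu_alg"
    by (rule hdu_alg_mult[OF hdu_alg_GH])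
  then show ?thesis by (simp add: mon_mult)
qed

lemma lead_at_du_pow: "lead_at v a b \<Longrightarrow> lead_at (((d_op \<circ> u_op) ^^ i) v) (a + i) (b + i)"
  by (induction i) (simp_all add: lead_at_u_op lead_at_d_op)

text \<open>On the line b - a = m, row b0 + n meets the support only at (a0 + n, b0 + n), where
  (du)^n g has a unit coefficient; a multiple c (du)^n g therefore clears that row of p.\<close>

lemma cancel_top_row:
  assumes p: "p \<in> fa_homog m" and g: "g \<in> fa_homog m" "coeffs g = basis_vec a0 b0"
    and m: "int b0 - int a0 = m"
    and rows: "\<And>a b. b0 + Suc n \<le> b \<Longrightarrow> coeffs p (a, b) = 0"
  obtains c where "mon (GH c # du_word n) \<odot> g \<in> fa_homog m"
    and "\<And>a b. b0 + n \<le> b \<Longrightarrow> coeffs (p - mon (GH c # du_word n) \<odot> g) (a, b) = 0"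
proof -
  let ?v = "((d_op \<circ> u_op) ^^ n) (basis_vec a0 b0)"
  let ?t = "(a0 + n, b0 + n)"
  have lead: "lead_at ?v (a0 + n) (b0 + n)"
    by (rule lead_at_du_pow[OF lead_at_basis_vec])
  then obtain u' where u': "?v ?t * u' = 1"
    by (metis dvdE lead_at_def)
  define c where "c = coeffs p ?t * u'"
  let ?q = "mon (GH c # du_word n) \<odot> g"
  have pFA: "p \<in> FA" and gFA: "g \<in> FA" using p g by (simp_all add: fa_homog_def)
  have q: "coeffs ?q = lmul_vec c ?v"
    using g by (simp add: coeffs_mult gFA act_mon word_op_du_word)
  have qhom: "?q \<in> fa_homog m"
    using fa_homog_mult[OF mon_homog[of "GH c # du_word n"] g(1)] by (simp add: word_deg_du_word)
  have "coeffs (p - ?q) (a, b) = 0" if "b0 + n \<le> b" for a b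
  proof (cases "b = b0 + n")
    case True
    show ?thesis
    proof (rule ccontr)
      assume nz: "coeffs (p - ?q) (a, b) \<noteq> 0"
      have "int b - int a = m"
        by (rule coeffs_homog_line[OF fa_homog_diff[OF p qhom] nz])
      then have t: "(a, b) = ?t" using True m by auto
      have "coeffs (p - ?q) ?t = coeffs p ?t - c * ?v ?t"
        by (simp add: coeffs_diff pFA gFA q lmul_vec_def)
      moreover have "c * ?v ?t = coeffs p ?t * (?v ?t * u')"
        unfolding c_def by (simp only: ac_simps)
      moreover note u'
      ultimately have "coeffs (p - ?q) ?t = 0" by (simp only: mult_1_right diff_self)
      with nz show False unfolding t by blast
    qed
  next
    case False
    then show ?thesis
      using that rows[of b a] lead by (simp add: coeffs_diff pFA gFA q lmul_vec_def lead_at_def)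
  qed
  with qhom that show ?thesis by blast
qed

lemma homog_eqv_hdu_multiple:
  assumes g: "g \<in> fa_homog m" "coeffs g = basis_vec a0 b0" "a0 = 0 \<or> b0 = 0"
    and m: "int b0 - int a0 = m"
  shows "p \<in> fa_homog m \<Longrightarrow> (\<And>a b. b0 + n \<le> b \<Longrightarrow> coeffs p (a, b) = 0)
    \<Longrightarrow> \<exists>R\<in>hdu_alg. p \<approx> R \<odot> g"
proof (induction n arbitrary: p)
  case 0
  have "coeffs p (a, b) = 0" for a b
  proof (cases "b0 \<le> b")
    case False
    then show ?thesis
      using coeffs_homog_line[OF "0.prems"(1), of a b] g(3) m by auto
  qed (use "0.prems"(2) in simp)
  then have "p \<in> I"
    using "0.prems"(1) by (intro coeffs_zero_imp_I) (auto simp: fa_homog_def)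
  then have "p \<approx> 0 \<odot> g" by (simp add: eqv_zero_iff)
  with hdu_alg_zero show ?case by blast
next
  case (Suc n)
  obtain c where q: "mon (GH c # du_word n) \<odot> g \<in> fa_homog m"
    and rows: "\<And>a b. b0 + n \<le> b \<Longrightarrow> coeffs (p - mon (GH c # du_word n) \<odot> g) (a, b) = 0"
    using cancel_top_row[OF Suc.prems(1) g(1,2) m Suc.prems(2)] by blast
  obtain R where R: "R \<in> hdu_alg" "p - mon (GH c # du_word n) \<odot> g \<approx> R \<odot> g"
    using Suc.IH[OF fa_homog_diff[OF Suc.prems(1) q] rows] by blast
  have gFA: "g \<in> FA" using g by (simp add: fa_homog_def)
  have "p \<approx> (p - mon (GH c # du_word n) \<odot> g) + mon (GH c # du_word n) \<odot> g"
    using Suc.prems(1) by (simp add: eqv_refl fa_homog_def)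
  also have "\<dots> \<approx> (R + mon (GH c # du_word n)) \<odot> g"
    using eqv_add[OF R(2) eqv_refl[of "mon (GH c # du_word n) \<odot> g"]] gFA
    by (simp add: fa_mult_add_left)
  finally show ?case
    using hdu_alg_add[OF R(1) mon_du_word_hdu_alg] by blast
qed

lemma homog_0_eqv_diagonal:
  assumes p: "p \<in> fa_homog 0"
  obtains N where "p \<approx> (\<Sum>k<N. nf (coeffs p (k, k)) k k)"
    and "\<And>a b. coeffs p (a, b) \<noteq> 0 \<Longrightarrow> a = b \<and> b < N"
proof -
  have pFA: "p \<in> FA" using p by (simp add: fa_homog_def)
  have diag: "a = b" if "coeffs p (a, b) \<noteq> 0" for a b
    using coeffs_homog_line[OF p that] by simp
  obtain N where N: "\<And>a b. coeffs p (a, b) \<noteq> 0 \<Longrightarrow> b < N"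
    using coeffs_rows_bounded[OF pFA] by blast
  have "p \<approx> nf_expansion (coeffs p) ((\<lambda>k. (k, k)) ` {..<N})"
    by (rule eqv_nf_expansion[OF pFA]) (use N diag in force)+
  also have "\<dots> = (\<Sum>k<N. nf (coeffs p (k, k)) k k)"
    by (simp add: nf_expansion_def sum.reindex inj_on_def)
  finally show ?thesis using that N diag by blast
qed

lemma hdu_alg_mult_injective:
  assumes R: "R \<in> hdu_alg" and g: "g \<in> FA" "lead_at (coeffs g) a0 b0" and RI: "R \<odot> g \<in> I"
  shows "R \<in> I"
proof -
  have RFA: "R \<in> FA" by (rule hdu_alg_FA[OF R])
  obtain N where R_nf: "R \<approx> (\<Sum>k<N. nf (coeffs R (k, k)) k k)"
    and supp: "\<And>a b. coeffs R (a, b) \<noteq> 0 \<Longrightarrow> a = b \<and> b < N"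
    using homog_0_eqv_diagonal[OF hdu_alg_homog[OF R]] by blast
  let ?A = "\<lambda>k. coeffs R (k, k)"
  have "(\<Sum>k<N. lmul_vec (?A k) ((d_op ^^ k) ((u_op ^^ k) (coeffs g))))
      = act (\<Sum>k<N. nf (?A k) k k) (coeffs g)"
    by (simp add: act_sum act_nf)
  also have "\<dots> = act R (coeffs g)"
    by (rule act_eqv[OF eqv_sym[OF R_nf]])
  also have "\<dots> = 0"
    using act_I[OF RI, of "basis_vec 0 0"] by (simp add: coeffs_def act_mult[OF RFA g(1)])
  finally have "(\<Sum>k<N. lmul_vec (?A k) ((d_op ^^ k) ((u_op ^^ k) (coeffs g)))) = 0" .
  moreover have "\<forall>k<N. lead_at ((d_op ^^ k) ((u_op ^^ k) (coeffs g))) (a0 + k) (b0 + k)"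
    using lead_at_d_op_pow[OF lead_at_u_op_pow[OF g(2)]] by blast
  ultimately have A: "\<forall>k<N. ?A k = 0"
    by (intro lead_at_independent)
  have "coeffs R = 0"
  proof
    fix y :: "nat \<times> nat"
    obtain a b where y: "y = (a, b)" by (cases y)
    show "coeffs R y = 0 y"
    proof (rule ccontr)
      assume "coeffs R y \<noteq> 0 y"
      then have nz: "coeffs R (a, b) \<noteq> 0" by (simp add: y)
      with A supp[OF nz] show False by auto
    qed
  qed
  then show ?thesis by (rule coeffs_zero_imp_I[OF RFA])
qed

lemma coeffs_grade_gen:
  obtains a0 b0 where "coeffs (grade_gen m) = basis_vec a0 b0" "a0 = 0 \<or> b0 = 0"
    "int b0 - int a0 = m"
proof (cases "0 \<le> m")
  case True
  have "(u_op ^^ k) (basis_vec 0 0) = basis_vec 0 k" for k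
    by (induction k) (simp_all add: u_op_basis_vec_0)
  then have "coeffs (grade_gen m) = basis_vec 0 (nat m)"
    using True by (simp add: grade_gen_def coeffs_def act_mon word_op_replicate)
  then show ?thesis using that True by simp
next
  case False
  have "(d_op ^^ k) (basis_vec 0 0) = basis_vec k 0" for k
    by (induction k) (simp_all add: d_op_basis_vec)
  then have "coeffs (grade_gen m) = basis_vec (nat (- m)) 0"
    using False by (simp add: grade_gen_def coeffs_def act_mon word_op_replicate)
  then show ?thesis using that False by simp
qed

lemma homog_eqv_hdu_mult_grade_gen:
  assumes p: "p \<in> fa_homog m"
  shows "\<exists>R\<in>hdu_alg. p \<approx> R \<odot> grade_gen m"
proof -
  obtain a0 b0 where g: "coeffs (grade_gen m) = basis_vec a0 b0" "a0 = 0 \<or> b0 = 0"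
    "int b0 - int a0 = m"
    by (rule coeffs_grade_gen)
  obtain N where N: "\<And>a b. coeffs p (a, b) \<noteq> 0 \<Longrightarrow> b < N"
    using p coeffs_rows_bounded by (auto simp: fa_homog_def)
  show ?thesis
  proof (rule homog_eqv_hdu_multiple[OF grade_gen_homog g p])
    fix a b assume "b0 + N \<le> b"
    then show "coeffs p (a, b) = 0" using N[of a b] by fastforce
  qed
qed

lemma hdu_alg_mult_grade_gen_injective:
  "R \<in> hdu_alg \<Longrightarrow> R \<odot> grade_gen m \<in> I \<Longrightarrow> R \<in> I"
  using coeffs_grade_gen[of m] hdu_alg_mult_injective grade_gen_homog lead_at_basis_vec
  by (metis (no_types, lifting) fa_homog_def mem_Collect_eq)

abbreviation cls where "cls \<equiv> gwa_cls \<iota> \<theta> z0 z1"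

lemma gwa_cls_eq_iff:
  assumes "x \<in> FA" "y \<in> FA"
  shows "cls x = cls y \<longleftrightarrow> x \<approx> y"
proof
  assume "cls x = cls y"
  moreover have "x \<in> cls x"
    using assms eqv_refl by (simp add: gwa_cls_def eqv_def fa_diff_eq)
  ultimately show "x \<approx> y"
    using assms by (simp add: gwa_cls_def eqv_def fa_diff_eq)
next
  assume "x \<approx> y"
  show "cls x = cls y"
  proof (rule set_eqI)
    fix z
    have "z \<approx> x \<longleftrightarrow> z \<approx> y"
      using \<open>x \<approx> y\<close> eqv_trans eqv_sym by blast
    then show "z \<in> cls x \<longleftrightarrow> z \<in> cls y"
      using assms by (simp add: gwa_cls_def eqv_def fa_diff_eq)
  qed
qed

lemma gwa_rep_cls: "x \<in> FA \<Longrightarrow> gwa_rep (cls x) \<approx> x"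
  unfolding gwa_rep_def
  by (rule someI2[of "\<lambda>y. y \<in> cls x" x]) (auto simp: gwa_cls_def eqv_def fa_diff_eq I_zero)

lemma gwa_add_cls: "x \<in> FA \<Longrightarrow> y \<in> FA \<Longrightarrow> gwa_add \<iota> \<theta> z0 z1 (cls x) (cls y) = cls (x + y)"
  using eqv_add[OF gwa_rep_cls gwa_rep_cls, of x y]
  by (simp add: gwa_add_def fa_add_eq gwa_cls_eq_iff eqv_FA1)

lemma gwa_mult_cls: "x \<in> FA \<Longrightarrow> y \<in> FA \<Longrightarrow> gwa_mult \<iota> \<theta> z0 z1 (cls x) (cls y) = cls (x \<odot> y)"
  using eqv_mult[OF gwa_rep_cls gwa_rep_cls, of x y]
  by (simp add: gwa_mult_def gwa_cls_eq_iff eqv_FA1)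

end

lemma gwa_left_module_iso_inv_into:
  assumes bij: "bij_betw \<psi> N M"
    and add: "\<And>X Y. X \<in> N \<Longrightarrow> Y \<in> N \<Longrightarrow>
      gwa_add \<iota> \<theta> z0 z1 X Y \<in> N \<and> \<psi> (gwa_add \<iota> \<theta> z0 z1 X Y) = gwa_add \<iota> \<theta> z0 z1 (\<psi> X) (\<psi> Y)"
    and mult: "\<And>r X. r \<in> Rg \<Longrightarrow> X \<in> N \<Longrightarrow>
      gwa_mult \<iota> \<theta> z0 z1 r X \<in> N \<and> \<psi> (gwa_mult \<iota> \<theta> z0 z1 r X) = gwa_mult \<iota> \<theta> z0 z1 r (\<psi> X)"
  shows "gwa_left_module_iso \<iota> \<theta> z0 z1 Rg M N (inv_into N \<psi>)"
proof -
  let ?\<phi> = "inv_into N \<psi>"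
  have \<phi>N: "?\<phi> X \<in> N" and \<psi>\<phi>: "\<psi> (?\<phi> X) = X" if "X \<in> M" for X
    using that bij by (auto simp: bij_betw_def inv_into_into f_inv_into_f)
  have \<phi>\<psi>: "?\<phi> (\<psi> X) = X" if "X \<in> N" for X
    using that bij by (simp add: bij_betw_def)
  show ?thesis
    unfolding gwa_left_module_iso_def
  proof (intro conjI ballI)
    show "bij_betw ?\<phi> M N" by (rule bij_betw_inv_into[OF bij])
  next
    fix X Y assume XY: "X \<in> M" "Y \<in> M"
    note add_\<phi> = add[OF \<phi>N[OF XY(1)] \<phi>N[OF XY(2)]]
    have "gwa_add \<iota> \<theta> z0 z1 X Y = \<psi> (gwa_add \<iota> \<theta> z0 z1 (?\<phi> X) (?\<phi> Y))"
      using add_\<phi> \<psi>\<phi>[OF XY(1)] \<psi>\<phi>[OF XY(2)] by simp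
    then have "?\<phi> (gwa_add \<iota> \<theta> z0 z1 X Y) = ?\<phi> (\<psi> (gwa_add \<iota> \<theta> z0 z1 (?\<phi> X) (?\<phi> Y)))"
      by (rule arg_cong)
    also have "\<dots> = gwa_add \<iota> \<theta> z0 z1 (?\<phi> X) (?\<phi> Y)"
      using add_\<phi> by (intro \<phi>\<psi>) blast
    finally show "?\<phi> (gwa_add \<iota> \<theta> z0 z1 X Y) = gwa_add \<iota> \<theta> z0 z1 (?\<phi> X) (?\<phi> Y)" .
  next
    fix r X assume rX: "r \<in> Rg" "X \<in> M"
    note mult_\<phi> = mult[OF rX(1) \<phi>N[OF rX(2)]]
    have "gwa_mult \<iota> \<theta> z0 z1 r X = \<psi> (gwa_mult \<iota> \<theta> z0 z1 r (?\<phi> X))"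
      using mult_\<phi> \<psi>\<phi>[OF rX(2)] by simp
    then have "?\<phi> (gwa_mult \<iota> \<theta> z0 z1 r X) = ?\<phi> (\<psi> (gwa_mult \<iota> \<theta> z0 z1 r (?\<phi> X)))"
      by (rule arg_cong)
    also have "\<dots> = gwa_mult \<iota> \<theta> z0 z1 r (?\<phi> X)"
      using mult_\<phi> by (intro \<phi>\<psi>) blast
    finally show "?\<phi> (gwa_mult \<iota> \<theta> z0 z1 r X) = gwa_mult \<iota> \<theta> z0 z1 r (?\<phi> X)" .
  qed
qed

context gwa
begin

definition rmult_gen :: "int \<Rightarrow> ('f, 'h) fa set \<Rightarrow> ('f, 'h) fa set" where
  "rmult_gen m X = gwa_mult \<iota> \<theta> z0 z1 X (cls (grade_gen m))"

lemma grade_gen_FA: "grade_gen m \<in> FA"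
  using grade_gen_homog[of m] unfolding fa_homog_def by blast

lemma rmult_gen_cls: "r \<in> hdu_alg \<Longrightarrow> rmult_gen m (cls r) = cls (r \<odot> grade_gen m)"
  by (simp add: rmult_gen_def gwa_mult_cls hdu_alg_FA grade_gen_FA)

lemma gwa_Hdu_eq: "gwa_Hdu \<iota> \<theta> z0 z1 = cls ` hdu_alg"
  by (simp add: gwa_Hdu_def)

lemma rmult_gen_bij: "bij_betw (rmult_gen m) (gwa_Hdu \<iota> \<theta> z0 z1) (gwa_component \<iota> \<theta> z0 z1 m)"
  unfolding bij_betw_def gwa_Hdu_eq gwa_component_def
proof
  let ?g = "grade_gen m"
  show "inj_on (rmult_gen m) (cls ` hdu_alg)"
  proof (rule inj_onI, clarify)
    fix r s assume rs: "r \<in> hdu_alg" "s \<in> hdu_alg" "rmult_gen m (cls r) = rmult_gen m (cls s)"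
    have FA: "r \<in> FA" "s \<in> FA" by (rule hdu_alg_FA[OF rs(1)], rule hdu_alg_FA[OF rs(2)])
    have "cls (r \<odot> ?g) = cls (s \<odot> ?g)" using rmult_gen_cls rs by simp
    then have "r \<odot> ?g - s \<odot> ?g \<in> I"
      using gwa_cls_eq_iff[OF FA_mult[OF FA(1) grade_gen_FA] FA_mult[OF FA(2) grade_gen_FA]]
      by (simp add: eqv_def)
    then have "r - s \<in> I"
      by (intro hdu_alg_mult_grade_gen_injective[OF hdu_alg_diff[OF rs(1,2)]])
        (simp add: fa_mult_diff_left)
    then show "cls r = cls s" using gwa_cls_eq_iff[OF FA] by (simp add: eqv_def FA)
  qed
  show "rmult_gen m ` cls ` hdu_alg = cls ` fa_homog m"
  proof (intro equalityI subsetI)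
    fix Z assume "Z \<in> rmult_gen m ` cls ` hdu_alg"
    then obtain r where r: "r \<in> hdu_alg" "Z = rmult_gen m (cls r)" by blast
    have "r \<odot> ?g \<in> fa_homog m"
      using fa_homog_mult[OF hdu_alg_homog[OF r(1)] grade_gen_homog] by simp
    then show "Z \<in> cls ` fa_homog m"
      using r(2) rmult_gen_cls[OF r(1)] by blast
  next
    fix Z assume "Z \<in> cls ` fa_homog m"
    then obtain p where p: "p \<in> fa_homog m" "Z = cls p" by blast
    then obtain R where R: "R \<in> hdu_alg" "p \<approx> R \<odot> ?g"
      using homog_eqv_hdu_mult_grade_gen by blast
    then have "cls p = cls (R \<odot> ?g)"
      using gwa_cls_eq_iff[OF eqv_FA1[OF R(2)] eqv_FA2[OF R(2)]] by blast
    then have "Z = rmult_gen m (cls R)" using p(2) rmult_gen_cls[OF R(1)] by simp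
    then show "Z \<in> rmult_gen m ` cls ` hdu_alg" using R(1) by blast
  qed
qed

lemma rmult_gen_add:
  assumes "X \<in> gwa_Hdu \<iota> \<theta> z0 z1" "Y \<in> gwa_Hdu \<iota> \<theta> z0 z1"
  shows "gwa_add \<iota> \<theta> z0 z1 X Y \<in> gwa_Hdu \<iota> \<theta> z0 z1
    \<and> rmult_gen m (gwa_add \<iota> \<theta> z0 z1 X Y) = gwa_add \<iota> \<theta> z0 z1 (rmult_gen m X) (rmult_gen m Y)"
proof -
  obtain r s where rs: "r \<in> hdu_alg" "s \<in> hdu_alg" "X = cls r" "Y = cls s"
    using assms unfolding gwa_Hdu_eq by blast
  have FA: "r \<in> FA" "s \<in> FA" by (rule hdu_alg_FA[OF rs(1)], rule hdu_alg_FA[OF rs(2)])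
  have sum: "gwa_add \<iota> \<theta> z0 z1 X Y = cls (r + s)"
    unfolding rs(3,4) by (rule gwa_add_cls[OF FA])
  have "rmult_gen m (cls (r + s)) = cls (r \<odot> grade_gen m + s \<odot> grade_gen m)"
    unfolding rmult_gen_cls[OF hdu_alg_add[OF rs(1,2)]] fa_mult_add_left ..
  also have "\<dots> = gwa_add \<iota> \<theta> z0 z1 (rmult_gen m X) (rmult_gen m Y)"
    unfolding rs(3,4) rmult_gen_cls[OF rs(1)] rmult_gen_cls[OF rs(2)]
    by (rule gwa_add_cls[symmetric]) (simp_all add: FA grade_gen_FA)
  finally have "rmult_gen m (cls (r + s)) = gwa_add \<iota> \<theta> z0 z1 (rmult_gen m X) (rmult_gen m Y)" .
  moreover have "cls (r + s) \<in> gwa_Hdu \<iota> \<theta> z0 z1"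
    unfolding gwa_Hdu_eq by (rule imageI[OF hdu_alg_add[OF rs(1,2)]])
  ultimately show ?thesis unfolding sum by (intro conjI)
qed

lemma rmult_gen_mult:
  assumes "R \<in> gwa_Hdu \<iota> \<theta> z0 z1" "X \<in> gwa_Hdu \<iota> \<theta> z0 z1"
  shows "gwa_mult \<iota> \<theta> z0 z1 R X \<in> gwa_Hdu \<iota> \<theta> z0 z1
    \<and> rmult_gen m (gwa_mult \<iota> \<theta> z0 z1 R X) = gwa_mult \<iota> \<theta> z0 z1 R (rmult_gen m X)"
proof -
  obtain r s where rs: "r \<in> hdu_alg" "s \<in> hdu_alg" "R = cls r" "X = cls s"
    using assms unfolding gwa_Hdu_eq by blast
  have FA: "r \<in> FA" "s \<in> FA" by (rule hdu_alg_FA[OF rs(1)], rule hdu_alg_FA[OF rs(2)])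
  have prod: "gwa_mult \<iota> \<theta> z0 z1 R X = cls (r \<odot> s)"
    unfolding rs(3,4) by (rule gwa_mult_cls[OF FA])
  have "rmult_gen m (cls (r \<odot> s)) = cls (r \<odot> (s \<odot> grade_gen m))"
    unfolding rmult_gen_cls[OF hdu_alg_mult[OF rs(1,2)]] fa_mult_assoc[OF FA grade_gen_FA] ..
  also have "\<dots> = gwa_mult \<iota> \<theta> z0 z1 R (rmult_gen m X)"
    unfolding rs(3,4) rmult_gen_cls[OF rs(2)]
    by (rule gwa_mult_cls[symmetric]) (simp_all add: FA grade_gen_FA)
  finally have "rmult_gen m (cls (r \<odot> s)) = gwa_mult \<iota> \<theta> z0 z1 R (rmult_gen m X)" .
  moreover have "cls (r \<odot> s) \<in> gwa_Hdu \<iota> \<theta> z0 z1"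
    unfolding gwa_Hdu_eq by (rule imageI[OF hdu_alg_mult[OF rs(1,2)]])
  ultimately show ?thesis unfolding prod by (intro conjI)
qed

end

text \<open>The isomorphism is the inverse of right multiplication by the class of u^m (or d^-m).\<close>

theorem proposition2p4:
  fixes \<iota> :: "'f::field \<Rightarrow> 'h::comm_ring_1" and \<theta> :: "'h \<Rightarrow> 'h" and z0 z1 :: 'h and m :: int
  assumes "is_alg_map \<iota>"
    and "is_alg_automorphism \<iota> \<theta>"
    and "\<exists>w. z1 * w = 1"
  shows "\<exists>\<phi>. gwa_left_module_iso \<iota> \<theta> z0 z1 (gwa_Hdu \<iota> \<theta> z0 z1)
              (gwa_component \<iota> \<theta> z0 z1 m) (gwa_Hdu \<iota> \<theta> z0 z1) \<phi>"
proof -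
  interpret gwa \<iota> \<theta> z0 z1
    using assms by unfold_locales (auto simp: dvd_def)
  have "gwa_left_module_iso \<iota> \<theta> z0 z1 (gwa_Hdu \<iota> \<theta> z0 z1) (gwa_component \<iota> \<theta> z0 z1 m)
      (gwa_Hdu \<iota> \<theta> z0 z1) (inv_into (gwa_Hdu \<iota> \<theta> z0 z1) (rmult_gen m))"
    by (rule gwa_left_module_iso_inv_into[OF rmult_gen_bij rmult_gen_add rmult_gen_mult])
  then show ?thesis by blast
qed

end
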